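(* Let $r\in\mathbb Z_m$, $k\ge1$, and $T_r=\mathrm{Id}_n+X_rY_r$, regarded as the $nm\times nm$ block matrix with $T_r$ in block $(r,r)$ and zeros elsewhere. For any initial condition $(X(0),Y(0),V_{s,\alpha}(0),W_{s,\alpha}(0))\in\mathcal M^\bullet$, the flow at time $t$ of the Hamiltonian vector field $f\mapsto\{\tfrac1k\operatorname{tr}(T_r^k),f\}$ is $X(t)=\exp(-tT_r(0)^k)X(0)$, $Y(t)=Y(0)\exp(tT_r(0)^k)$, $V_{s,\alpha}(t)=V_{s,\alpha}(0)$, $W_{s,\alpha}(t)=W_{s,\alpha}(0)$, where $T_r(0)=\mathrm{Id}_n+X_r(0)Y_r(0)$ (in block $(r,r)$).
   Context: Fix integers $m\ge2$, $n\ge1$ and $\mathbf d=(d_0,\dots,d_{m-1})\in\mathbb N^m$ with $d_0\ge1$. Indices $r,s$ range over $\mathbb Z_m$, identified with $\{0,\dots,m-1\}$ with its usual order; Kronecker deltas of such indices are taken modulo $m$. A spin index is a pair $(s,\alpha)$ with $s\in\mathbb Z_m$, $1\le\alpha\le d_s$. $\mathcal M^\bullet$ is the smooth affine variety of tuples $(X_s,Y_s,V_{s,\alpha},W_{s,\alpha})$, $X_s,Y_s\in\mathrm{Mat}(n\times n,\mathbb C)$, $V_{s,\alpha}\in\mathrm{Mat}(1\times n,\mathbb C)$, $W_{s,\alpha}\in\mathrm{Mat}(n\times1,\mathbb C)$, with $\mathrm{Id}_n+X_sY_s$, $\mathrm{Id}_n+Y_sX_s$, $\mathrm{Id}_n+W_{s,\alpha}V_{s,\alpha}$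 invertible and $1+V_{s,\alpha}W_{s,\alpha}\ne0$. $X=\sum_sX_s$ is the $nm\times nm$ block matrix whose only nonzero $n\times n$ blocks are $X_s$ in block position $(s,s+1)$; $Y=\sum_sY_s$ has $Y_s$ in block position $(s+1,s)$. For a function $F$, the Hamiltonian vector field is $f\mapsto\{F,f\}$ and its flow solves $\frac{d}{dt}f=\{F,f\}$ entrywise. The quasi-Poisson bracket $\{-,-\}$ on $\mathcal M^\bullet$ is the antisymmetric biderivation given on entry functions by ($o(s,r)=\operatorname{sgn}(r-s)$ computed in $\{0,\dots,m-1\}$, $o(\alpha,\beta)=\operatorname{sgn}(\beta-\alpha)$): $\{(X_r)_{ij},(X_s)_{kl}\}=\tfrac12\delta_{s,r-1}(X_{r-1}X_r)_{kj}\delta_{il}-\tfrac12\delta_{s,r+1}\delta_{kj}(X_rX_{r+1})_{il}$; $\{(Y_r)_{ij},(Y_s)_{kl}\}=\tfrac12\delta_{s,r-1}\delta_{kj}(Y_rY_{r-1})_{il}-\tfrac12\delta_{s,r+1}(Y_{r+1}Y_r)_{kj}\delta_{il}$; $\{(X_r)_{ij},(Y_s)_{kl}\}=\delta_{sr}\big(\delta_{kj}\delta_{il}+\tfrac12(Y_rX_r)_{kj}\delta_{il}+\tfrac12\delta_{kj}(X_rY_r)_{il}\big)-\tfrac12\delta_{s,r-1}(X_r)_{kj}(Y_{r-1})_{il}+\tfrac12\delta_{s,r+1}(Y_{r+1})_{kj}(X_r)_{il}$; $\{(X_r)_{ij},(W_{s,\alpha})_k\}=\tfrac12\delta_{s,r+1}\delta_{kj}(X_rW_{r+1,\alpha})_i-\tfrac12\delta_{rs}(X_r)_{kj}(W_{r,\alpha})_i$;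 $\{(X_r)_{ij},(V_{s,\alpha})_l\}=\tfrac12\delta_{rs}(V_{r,\alpha}X_r)_j\delta_{il}-\tfrac12\delta_{s,r+1}(V_{r+1,\alpha})_j(X_r)_{il}$; $\{(Y_r)_{ij},(W_{s,\alpha})_k\}=\tfrac12\delta_{rs}\delta_{kj}(Y_rW_{r,\alpha})_i-\tfrac12\delta_{s,r+1}(Y_r)_{kj}(W_{r+1,\alpha})_i$; $\{(Y_r)_{ij},(V_{s,\alpha})_l\}=\tfrac12\delta_{s,r+1}(V_{r+1,\alpha}Y_r)_j\delta_{il}-\tfrac12\delta_{rs}(V_{r,\alpha})_j(Y_r)_{il}$; $\{(V_{s,\alpha})_j,(V_{r,\beta})_l\}=-\tfrac12o(s,r)(V_{s,\alpha})_j(V_{r,\beta})_l-\tfrac12\delta_{sr}o(\alpha,\beta)\big((V_{r,\beta})_j(V_{s,\alpha})_l+(V_{s,\alpha})_j(V_{r,\beta})_l\big)$; $\{(W_{s,\alpha})_i,(W_{r,\beta})_k\}=-\tfrac12o(s,r)(W_{r,\beta})_k(W_{s,\alpha})_i-\tfrac12\delta_{sr}o(\alpha,\beta)\big((W_{r,\beta})_k(W_{s,\alpha})_i+(W_{s,\alpha})_k(W_{r,\beta})_i\big)$; $\{(V_{s,\alpha})_j,(W_{r,\beta})_k\}=\tfrac12o(s,r)(W_{r,\beta})_k(V_{s,\alpha})_j+\delta_{sr}\delta_{\alpha\beta}\big(\delta_{kj}+\tfrac12(W_{r,\beta})_k(V_{s,\alpha})_j+\tfrac12\delta_{kj}V_{s,\alpha}W_{r,\beta}\big)+\tfrac12\delta_{sr}o(\alpha,\beta)\big(\delta_{kj}V_{s,\alpha}W_{r,\beta}+(W_{r,\beta})_k(V_{s,\alpha})_j\big)$.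 *)

theory Defs
  imports "HOL-Analysis.Analysis"
begin

text \<open>A point of the ambient affine space is a function from coordinate labels to complex
numbers.  CX s i j is the entry (i,j) of X_s, CY s i j the entry (i,j) of Y_s,
CV s a j the j-th entry of the row vector V_{s,a}, CW s a i the i-th entry of the column
vector W_{s,a}.  Indices s range over 0..m-1, matrix indices over 0..n-1 and spin labels a
over 1..d s.\<close>

datatype coord = CX nat nat nat | CY nat nat nat | CV nat nat nat | CW nat nat nat

type_synonym point = "coord \<Rightarrow> complex"

definition coords :: "nat \<Rightarrow> nat \<Rightarrow> (nat \<Rightarrow> nat) \<Rightarrow> coord set" where
  "coords m n d =
     {CX s i j | s i j. s < m \<and> i < n \<and> j < n} \<union>
     {CY s i j | s i j. s < m \<and> i < n \<and> j < n} \<union>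
     {CV s a j | s a j. s < m \<and> 1 \<le> a \<and> a \<le> d s \<and> j < n} \<union>
     {CW s a i | s a i. s < m \<and> 1 \<le> a \<and> a \<le> d s \<and> i < n}"

definition mmul :: "nat \<Rightarrow> (nat \<Rightarrow> nat \<Rightarrow> complex) \<Rightarrow> (nat \<Rightarrow> nat \<Rightarrow> complex) \<Rightarrow> nat \<Rightarrow> nat \<Rightarrow> complex" where
  "mmul N A B i j = (\<Sum>l<N. A i l * B l j)"

definition mid :: "nat \<Rightarrow> nat \<Rightarrow> complex" where
  "mid i j = (if i = j then 1 else 0)"

primrec mpow :: "nat \<Rightarrow> (nat \<Rightarrow> nat \<Rightarrow> complex) \<Rightarrow> nat \<Rightarrow> nat \<Rightarrow> nat \<Rightarrow> complex" where
  "mpow N A 0 = mid"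
| "mpow N A (Suc q) = mmul N A (mpow N A q)"

definition mexp :: "nat \<Rightarrow> (nat \<Rightarrow> nat \<Rightarrow> complex) \<Rightarrow> nat \<Rightarrow> nat \<Rightarrow> complex" where
  "mexp N A i j = (\<Sum>q. mpow N A q i j / of_nat (fact q))"

definition minvertible :: "nat \<Rightarrow> (nat \<Rightarrow> nat \<Rightarrow> complex) \<Rightarrow> bool" where
  "minvertible N A \<longleftrightarrow> (\<exists>B. \<forall>i<N. \<forall>j<N. mmul N A B i j = mid i j \<and> mmul N B A i j = mid i j)"

definition MX :: "point \<Rightarrow> nat \<Rightarrow> nat \<Rightarrow> nat \<Rightarrow> complex" where "MX p s i j = p (CX s i j)"
definition MY :: "point \<Rightarrow> nat \<Rightarrow> nat \<Rightarrow> nat \<Rightarrow> complex" where "MY p s i j = p (CY s i j)"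
definition VV :: "point \<Rightarrow> nat \<Rightarrow> nat \<Rightarrow> nat \<Rightarrow> complex" where "VV p s a j = p (CV s a j)"
definition WW :: "point \<Rightarrow> nat \<Rightarrow> nat \<Rightarrow> nat \<Rightarrow> complex" where "WW p s a i = p (CW s a i)"

definition Mbullet :: "nat \<Rightarrow> nat \<Rightarrow> (nat \<Rightarrow> nat) \<Rightarrow> point \<Rightarrow> bool" where
  "Mbullet m n d p \<longleftrightarrow>
     (\<forall>s<m. minvertible n (\<lambda>i j. mid i j + mmul n (MX p s) (MY p s) i j)
          \<and> minvertible n (\<lambda>i j. mid i j + mmul n (MY p s) (MX p s) i j)
          \<and> (\<forall>a. 1 \<le> a \<and> a \<le> d s \<longrightarrow>
                minvertible n (\<lambda>i j. mid i j + WW p s a i * VV p s a j)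
              \<and> 1 + (\<Sum>l<n. VV p s a l * WW p s a l) \<noteq> 0))"

text \<open>Big nm x nm block matrices: global index s*n+i corresponds to block s, entry i.\<close>
definition Xbig :: "nat \<Rightarrow> nat \<Rightarrow> point \<Rightarrow> nat \<Rightarrow> nat \<Rightarrow> complex" where
  "Xbig m n p a b = (if b div n = (a div n + 1) mod m then p (CX (a div n) (a mod n) (b mod n)) else 0)"

definition Ybig :: "nat \<Rightarrow> nat \<Rightarrow> point \<Rightarrow> nat \<Rightarrow> nat \<Rightarrow> complex" where
  "Ybig m n p a b = (if a div n = (b div n + 1) mod m then p (CY (b div n) (a mod n) (b mod n)) else 0)"

definition Tbig :: "nat \<Rightarrow> point \<Rightarrow> nat \<Rightarrow> nat \<Rightarrow> nat \<Rightarrow> complex" where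
  "Tbig n p r a b = (if a div n = r \<and> b div n = r
      then mid (a mod n) (b mod n) + mmul n (MX p r) (MY p r) (a mod n) (b mod n) else 0)"

definition dl :: "nat \<Rightarrow> nat \<Rightarrow> complex" where "dl a b = (if a = b then 1 else 0)"

definition osg :: "nat \<Rightarrow> nat \<Rightarrow> complex" where
  "osg a b = (if a < b then 1 else if a = b then 0 else -1)"

definition sucm :: "nat \<Rightarrow> nat \<Rightarrow> nat" where "sucm m r = (r + 1) mod m"
definition predm :: "nat \<Rightarrow> nat \<Rightarrow> nat" where "predm m r = (r + m - 1) mod m"

text \<open>The bracket on the listed ordered pairs of coordinate functions, evaluated at p.
Returns None for the pairs that are obtained by antisymmetry.\<close>
fun brBase :: "nat \<Rightarrow> nat \<Rightarrow> coord \<Rightarrow> coord \<Rightarrow> point \<Rightarrow> complex option" where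
  "brBase m n (CX r i j) (CX s k l) p = Some (
      1/2 * dl s (predm m r) * mmul n (MX p (predm m r)) (MX p r) k j * dl i l
    - 1/2 * dl s (sucm m r) * dl k j * mmul n (MX p r) (MX p (sucm m r)) i l)"
| "brBase m n (CY r i j) (CY s k l) p = Some (
      1/2 * dl s (predm m r) * dl k j * mmul n (MY p r) (MY p (predm m r)) i l
    - 1/2 * dl s (sucm m r) * mmul n (MY p (sucm m r)) (MY p r) k j * dl i l)"
| "brBase m n (CX r i j) (CY s k l) p = Some (
      dl s r * (dl k j * dl i l + 1/2 * mmul n (MY p r) (MX p r) k j * dl i l
                + 1/2 * dl k j * mmul n (MX p r) (MY p r) i l)
    - 1/2 * dl s (predm m r) * MX p r k j * MY p (predm m r) i l
    + 1/2 * dl s (sucm m r) * MY p (sucm m r) k j * MX p r i l)"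
| "brBase m n (CX r i j) (CW s a k) p = Some (
      1/2 * dl s (sucm m r) * dl k j * (\<Sum>q<n. MX p r i q * WW p (sucm m r) a q)
    - 1/2 * dl r s * MX p r k j * WW p r a i)"
| "brBase m n (CX r i j) (CV s a l) p = Some (
      1/2 * dl r s * (\<Sum>q<n. VV p r a q * MX p r q j) * dl i l
    - 1/2 * dl s (sucm m r) * VV p (sucm m r) a j * MX p r i l)"
| "brBase m n (CY r i j) (CW s a k) p = Some (
      1/2 * dl r s * dl k j * (\<Sum>q<n. MY p r i q * WW p r a q)
    - 1/2 * dl s (sucm m r) * MY p r k j * WW p (sucm m r) a i)"
| "brBase m n (CY r i j) (CV s a l) p = Some (
      1/2 * dl s (sucm m r) * (\<Sum>q<n. VV p (sucm m r) a q * MY p r q j) * dl i l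
    - 1/2 * dl r s * VV p r a j * MY p r i l)"
| "brBase m n (CV s a j) (CV r b l) p = Some (
    - 1/2 * osg s r * VV p s a j * VV p r b l
    - 1/2 * dl s r * osg a b * (VV p r b j * VV p s a l + VV p s a j * VV p r b l))"
| "brBase m n (CW s a i) (CW r b k) p = Some (
    - 1/2 * osg s r * WW p r b k * WW p s a i
    - 1/2 * dl s r * osg a b * (WW p r b k * WW p s a i + WW p s a k * WW p r b i))"
| "brBase m n (CV s a j) (CW r b k) p = Some (
      1/2 * osg s r * WW p r b k * VV p s a j
    + dl s r * dl a b * (dl k j + 1/2 * WW p r b k * VV p s a j
                         + 1/2 * dl k j * (\<Sum>q<n. VV p s a q * WW p r b q))
    + 1/2 * dl s r * osg a b * (dl k j * (\<Sum>q<n. VV p s a q * WW p r b q)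
                                + WW p r b k * VV p s a j))"
| "brBase m n _ _ p = None"

definition br :: "nat \<Rightarrow> nat \<Rightarrow> coord \<Rightarrow> coord \<Rightarrow> point \<Rightarrow> complex" where
  "br m n c c' p = (case brBase m n c c' p of Some v \<Rightarrow> v
                    | None \<Rightarrow> (case brBase m n c' c p of Some v \<Rightarrow> - v | None \<Rightarrow> 0))"

definition pdiff :: "coord \<Rightarrow> (point \<Rightarrow> complex) \<Rightarrow> point \<Rightarrow> complex" where
  "pdiff c F p = deriv (\<lambda>z. F (p(c := z))) (p c)"

text \<open>{F, f} for a coordinate function f, via the biderivation property:
 {F, f} = sum over coordinates c of (dF/dc) {c, f}.\<close>
definition ham :: "nat \<Rightarrow> nat \<Rightarrow> (nat \<Rightarrow> nat) \<Rightarrow> (point \<Rightarrow> complex) \<Rightarrow> coord \<Rightarrow> point \<Rightarrow> complex" where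
  "ham m n d F f p = (\<Sum>c\<in>coords m n d. pdiff c F p * br m n c f p)"

definition ham_flow_curve :: "nat \<Rightarrow> nat \<Rightarrow> (nat \<Rightarrow> nat) \<Rightarrow> (point \<Rightarrow> complex) \<Rightarrow> real set \<Rightarrow> (real \<Rightarrow> point) \<Rightarrow> bool" where
  "ham_flow_curve m n d F I \<gamma> \<longleftrightarrow>
     (\<forall>c\<in>coords m n d. \<forall>t\<in>I.
        ((\<lambda>s. \<gamma> s c) has_vector_derivative ham m n d F c (\<gamma> t)) (at t within I))"

definition Fham :: "nat \<Rightarrow> nat \<Rightarrow> nat \<Rightarrow> nat \<Rightarrow> point \<Rightarrow> complex" where
  "Fham m n r k p = (1 / of_nat k) * (\<Sum>a<n*m. mpow (n*m) (Tbig n p r) k a a)"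

end

theory Submission
  imports Defs
begin

text \<open>Only the coordinates of \<open>X_r\<close> and \<open>Y_r\<close> enter \<open>F = tr(T_r^k)/k\<close>; its gradients are
  \<open>\<partial>F/\<partial>X_r = (Y_r T_r^{k-1})^T\<close> and \<open>\<partial>F/\<partial>Y_r = (T_r^{k-1} X_r)^T\<close>. Contracting them with the
  bracket, all contributions of neighbouring blocks and of the spin variables cancel because
  \<open>T_r^{k-1}\<close> commutes with \<open>X_r Y_r\<close>, and the Hamiltonian vector field is
  \<open>X_r' = -T_r^k X_r\<close>, \<open>Y_r' = Y_r T_r^k\<close>, all other coordinates fixed. Along it \<open>X_r Y_r\<close>, hence
  \<open>T_r\<close>, is constant, so the system is linear with constant coefficients: it is solved by matrix
  exponentials, uniquely because \<open>exp(t T_r^k) X_r(t)\<close> and \<open>Y_r(t) exp(-t T_r^k)\<close> have zero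
  derivative. The exponential of the block matrix \<open>T_r^k\<close> is \<open>exp(T_r^k)\<close> in block \<open>(r, r)\<close>
  and the identity elsewhere, which turns the blockwise solution into the \<open>nm \<times> nm\<close> formulas.\<close>

type_synonym cmat = "nat \<Rightarrow> nat \<Rightarrow> complex"

lemma mmul_assoc: "mmul N (mmul N A B) C = mmul N A (mmul N B C)"
proof (intro ext)
  fix i j
  show "mmul N (mmul N A B) C i j = mmul N A (mmul N B C) i j"
    unfolding mmul_def sum_distrib_left sum_distrib_right mult.assoc
    by (rule sum.swap)
qed

lemma mmul_add_left: "mmul N (\<lambda>i j. A i j + B i j) C i j = mmul N A C i j + mmul N B C i j"
  unfolding mmul_def by (simp add: distrib_right sum.distrib)

lemma mmul_add_right: "mmul N A (\<lambda>i j. B i j + C i j) i j = mmul N A B i j + mmul N A C i j"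
  unfolding mmul_def by (simp add: distrib_left sum.distrib)

lemma mmul_scalar_left: "mmul N (\<lambda>i j. c * A i j) B i j = c * mmul N A B i j"
  unfolding mmul_def by (simp add: sum_distrib_left mult.assoc)

lemma mmul_scalar_right: "mmul N A (\<lambda>i j. c * B i j) i j = c * mmul N A B i j"
  unfolding mmul_def by (simp add: sum_distrib_left mult.left_commute)

lemma mmul_uminus_left: "mmul N (\<lambda>i j. - A i j) B i j = - mmul N A B i j"
  unfolding mmul_def by (simp add: sum_negf)

lemma mmul_uminus_right: "mmul N A (\<lambda>i j. - B i j) i j = - mmul N A B i j"
  unfolding mmul_def by (simp add: sum_negf)

lemma mmul_mid_left: "i < N \<Longrightarrow> mmul N mid B i j = B i j"
  unfolding mmul_def mid_def by (simp add: if_distrib[of "\<lambda>x. x * _"] cong: if_cong)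

lemma mmul_mid_right: "j < N \<Longrightarrow> mmul N A mid i j = A i j"
  unfolding mmul_def mid_def by (simp add: if_distrib[of "\<lambda>x. _ * x"] cong: if_cong)

lemma mmul_cong_left: "(\<And>l. l < N \<Longrightarrow> A i l = A' i l) \<Longrightarrow> mmul N A B i j = mmul N A' B i j"
  unfolding mmul_def by simp

lemma mmul_cong_right: "(\<And>l. l < N \<Longrightarrow> B l j = B' l j) \<Longrightarrow> mmul N A B i j = mmul N A B' i j"
  unfolding mmul_def by simp

text \<open>Index functions carry junk outside \<open>[0, N)\<^sup>2\<close>, so matrices are compared only there.\<close>

definition meq :: "nat \<Rightarrow> cmat \<Rightarrow> cmat \<Rightarrow> bool" where
  "meq N A B \<longleftrightarrow> (\<forall>i<N. \<forall>j<N. A i j = B i j)"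

lemma meq_refl [simp]: "meq N A A"
  by (simp add: meq_def)

lemma mmul_meq: "meq N A A' \<Longrightarrow> meq N B B' \<Longrightarrow> i < N \<Longrightarrow> j < N \<Longrightarrow> mmul N A B i j = mmul N A' B' i j"
  unfolding mmul_def meq_def by simp

lemma mpow_meq: "meq N A A' \<Longrightarrow> meq N (mpow N A q) (mpow N A' q)"
  by (induction q) (auto simp: meq_def intro!: mmul_meq[unfolded meq_def])

lemma mpow_Suc_right: "i < N \<Longrightarrow> j < N \<Longrightarrow> mpow N A (Suc q) i j = mmul N (mpow N A q) A i j"
proof (induction q arbitrary: i j)
  case 0
  then show ?case by (simp add: mmul_mid_left mmul_mid_right)
next
  case (Suc q)
  have "mpow N A (Suc (Suc q)) i j = mmul N A (mmul N (mpow N A q) A) i j"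
    unfolding mpow.simps(2)[of N A "Suc q"]
    by (rule mmul_cong_right) (use Suc in \<open>simp only: mpow.simps(2)\<close>)
  also have "\<dots> = mmul N (mpow N A (Suc q)) A i j"
    by (simp add: mmul_assoc)
  finally show ?case .
qed

lemma mpow_scalar: "mpow N (\<lambda>i j. c * A i j) q i j = c ^ q * mpow N A q i j"
proof (induction q arbitrary: i j)
  case 0
  then show ?case by simp
next
  case (Suc q)
  have "mpow N (\<lambda>i j. c * A i j) (Suc q) i j = mmul N (\<lambda>i j. c * A i j) (\<lambda>i j. c ^ q * mpow N A q i j) i j"
    unfolding mpow.simps by (rule mmul_cong_right) (rule Suc.IH)
  then show ?case by (simp only: mmul_scalar_left mmul_scalar_right mpow.simps) simp
qed

definition mcomm :: "nat \<Rightarrow> cmat \<Rightarrow> cmat \<Rightarrow> bool" where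
  "mcomm N A C \<longleftrightarrow> meq N (mmul N A C) (mmul N C A)"

lemma mcomm_self: "mcomm N A A"
  by (simp add: mcomm_def)

lemma mcomm_uminus: "mcomm N A C \<Longrightarrow> mcomm N (\<lambda>i j. - A i j) C"
  by (simp add: mcomm_def meq_def mmul_uminus_left mmul_uminus_right)

lemma mcomm_mid_plus: "mcomm N (\<lambda>i j. mid i j + A i j) A"
  by (simp add: mcomm_def meq_def mmul_add_left mmul_add_right mmul_mid_left mmul_mid_right)

lemma mcomm_mmul: "mcomm N C M \<Longrightarrow> mcomm N (mmul N C M) M"
  unfolding mcomm_def meq_def
  by (metis (no_types, lifting) mmul_assoc mmul_cong_left)

lemma mcomm_mpow:
  assumes "mcomm N A C"
  shows "mcomm N (mpow N A q) C"
proof (induction q)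
  case 0
  then show ?case by (simp add: mcomm_def meq_def mmul_mid_left mmul_mid_right)
next
  case (Suc q)
  have "mmul N (mpow N A (Suc q)) C i j = mmul N C (mpow N A (Suc q)) i j"
    if "i < N" "j < N" for i j
  proof -
    have "mmul N (mpow N A (Suc q)) C i j = mmul N A (mmul N (mpow N A q) C) i j"
      by (simp add: mmul_assoc)
    also have "\<dots> = mmul N A (mmul N C (mpow N A q)) i j"
      by (rule mmul_cong_right) (use Suc that in \<open>simp add: mcomm_def meq_def\<close>)
    also have "\<dots> = mmul N (mmul N A C) (mpow N A q) i j"
      by (simp add: mmul_assoc)
    also have "\<dots> = mmul N (mmul N C A) (mpow N A q) i j"
      by (rule mmul_cong_left) (use assms that in \<open>simp add: mcomm_def meq_def\<close>)
    finally show ?thesis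
      by (simp add: mmul_assoc)
  qed
  then show ?case
    by (simp add: mcomm_def meq_def)
qed


section \<open>The matrix exponential\<close>

definition mbound :: "nat \<Rightarrow> cmat \<Rightarrow> real" where
  "mbound N A = 1 + (\<Sum>a<N. \<Sum>b<N. norm (A a b))"

lemma mbound_ge_1: "mbound N A \<ge> 1"
  unfolding mbound_def by (simp add: sum_nonneg)

lemma row_norm_le_mbound: "i < N \<Longrightarrow> (\<Sum>l<N. norm (A i l)) \<le> mbound N A"
  unfolding mbound_def
  by (rule order_trans[OF member_le_sum[of i "{..<N}" "\<lambda>a. \<Sum>b<N. norm (A a b)"]])
     (auto intro: sum_nonneg)

lemma norm_mpow_le: "i < N \<Longrightarrow> norm (mpow N A q i j) \<le> mbound N A ^ q"
proof (induction q arbitrary: i)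
  case 0
  then show ?case by (simp add: mid_def)
next
  case (Suc q)
  have "norm (mpow N A (Suc q) i j) \<le> (\<Sum>l<N. norm (A i l) * norm (mpow N A q l j))"
    unfolding mpow.simps mmul_def by (rule order_trans[OF norm_sum]) (simp add: norm_mult)
  also have "\<dots> \<le> (\<Sum>l<N. norm (A i l)) * mbound N A ^ q"
    unfolding sum_distrib_right by (intro sum_mono mult_left_mono Suc.IH) auto
  also have "\<dots> \<le> mbound N A * mbound N A ^ q"
    using row_norm_le_mbound[OF Suc.prems, of A] mbound_ge_1[of N A] by (intro mult_right_mono) auto
  finally show ?case by simp
qed

lemma summable_mpow_series:
  assumes "i < N"
  shows "summable (\<lambda>q. mpow N A q i j / of_nat (fact q) * z ^ q)"
proof (rule summable_norm_cancel, rule summable_comparison_test')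
  show "summable (\<lambda>q. inverse (fact q) * (mbound N A * norm z) ^ q)"
    by (rule summable_exp)
  fix q
  have "norm (mpow N A q i j / of_nat (fact q) * z ^ q) = norm (mpow N A q i j) * inverse (fact q) * norm z ^ q"
    by (simp add: norm_mult norm_divide norm_power divide_inverse norm_inverse)
  also have "\<dots> \<le> mbound N A ^ q * inverse (fact q) * norm z ^ q"
    by (intro mult_right_mono norm_mpow_le assms) auto
  finally show "norm (norm (mpow N A q i j / of_nat (fact q) * z ^ q)) \<le> inverse (fact q) * (mbound N A * norm z) ^ q"
    by (simp add: power_mult_distrib mult_ac)
qed

lemma mexp_scalar_series: "mexp N (\<lambda>a b. z * A a b) i j = (\<Sum>q. mpow N A q i j / of_nat (fact q) * z ^ q)"
  unfolding mexp_def mpow_scalar by (simp add: ac_simps)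

lemma mexp_mmul:
  assumes "i < N"
  shows "mmul N (mexp N (\<lambda>a b. z * A a b)) C i j = (\<Sum>q. mmul N (mpow N A q) C i j / of_nat (fact q) * z ^ q)"
proof -
  have "mmul N (mexp N (\<lambda>a b. z * A a b)) C i j
      = (\<Sum>l<N. \<Sum>q. mpow N A q i l / of_nat (fact q) * z ^ q * C l j)"
    unfolding mmul_def mexp_scalar_series
    by (intro sum.cong refl suminf_mult2) (rule summable_mpow_series[OF assms])
  also have "\<dots> = (\<Sum>q. \<Sum>l<N. mpow N A q i l / of_nat (fact q) * z ^ q * C l j)"
    by (rule suminf_sum[symmetric]) (intro summable_mult2 summable_mpow_series assms)
  also have "\<dots> = (\<Sum>q. mmul N (mpow N A q) C i j / of_nat (fact q) * z ^ q)"
    by (simp add: mmul_def sum_distrib_right sum_divide_distrib divide_inverse sum_distrib_left ac_simps)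
  finally show ?thesis .
qed

lemma mmul_mexp: "mmul N C (mexp N (\<lambda>a b. z * A a b)) i j = (\<Sum>q. mmul N C (mpow N A q) i j / of_nat (fact q) * z ^ q)"
proof -
  have "mmul N C (mexp N (\<lambda>a b. z * A a b)) i j
      = (\<Sum>l<N. \<Sum>q. C i l * (mpow N A q l j / of_nat (fact q) * z ^ q))"
    unfolding mmul_def mexp_scalar_series
    by (intro sum.cong refl suminf_mult[symmetric] summable_mpow_series) auto
  also have "\<dots> = (\<Sum>q. \<Sum>l<N. C i l * (mpow N A q l j / of_nat (fact q) * z ^ q))"
    by (rule suminf_sum[symmetric], rule summable_mult, rule summable_mpow_series) simp
  also have "\<dots> = (\<Sum>q. mmul N C (mpow N A q) i j / of_nat (fact q) * z ^ q)"
    by (simp add: mmul_def sum_distrib_right sum_divide_distrib divide_inverse sum_distrib_left ac_simps)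
  finally show ?thesis .
qed

lemma mexp_mcomm:
  assumes "mcomm N A C" "i < N" "j < N"
  shows "mmul N (mexp N (\<lambda>a b. z * A a b)) C i j = mmul N C (mexp N (\<lambda>a b. z * A a b)) i j"
  unfolding mexp_mmul[OF assms(2)] mmul_mexp
  using mcomm_mpow[OF assms(1)] assms(2,3) by (simp add: mcomm_def meq_def)

lemma mexp_zero: "mexp N (\<lambda>a b. 0) = mid"
proof (intro ext)
  fix i j
  have "mexp N (\<lambda>a b. 0) i j = (\<Sum>q. mpow N mid q i j / of_nat (fact q) * 0 ^ q)"
    using mexp_scalar_series[of N 0 mid i j] by simp
  also have "\<dots> = (\<Sum>q. if q = 0 then mid i j else 0)"
    by (intro suminf_cong) simp
  finally have "mexp N (\<lambda>a b. 0) i j = (\<Sum>q. if q = 0 then mid i j else 0)" .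
  then show "mexp N (\<lambda>a b. 0) i j = mid i j"
    using sums_single[of 0 "\<lambda>_. mid i j"] by (simp add: sums_iff)
qed

lemma diffs_mpow_series:
  "diffs (\<lambda>q. mpow N A q i j / of_nat (fact q)) q = mpow N A (Suc q) i j / of_nat (fact q)"
  by (simp add: diffs_def field_simps del: mpow.simps of_nat_Suc)

lemma has_field_derivative_mexp:
  assumes "i < N"
  shows "((\<lambda>z. mexp N (\<lambda>a b. z * A a b) i j) has_field_derivative mmul N A (mexp N (\<lambda>a b. z * A a b)) i j) (at z)"
proof -
  define c where "c q = mpow N A q i j / of_nat (fact q)" for q
  have "((\<lambda>z. \<Sum>q. c q * z ^ q) has_field_derivative (\<Sum>q. diffs c q * z ^ q)) (at z)"
  proof (rule termdiffs_strong)
    show "summable (\<lambda>q. c q * (of_real (norm z + 1)) ^ q)"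
      unfolding c_def by (rule summable_mpow_series[OF assms])
  qed simp
  moreover have "(\<Sum>q. diffs c q * z ^ q) = mmul N A (mexp N (\<lambda>a b. z * A a b)) i j"
    unfolding mmul_mexp c_def diffs_mpow_series by simp
  ultimately show ?thesis
    unfolding mexp_scalar_series c_def by simp
qed

abbreviation mexpt :: "nat \<Rightarrow> cmat \<Rightarrow> real \<Rightarrow> cmat" where
  "mexpt N A t \<equiv> mexp N (\<lambda>a b. of_real t * A a b)"

lemma has_vector_derivative_mexpt:
  "i < N \<Longrightarrow> ((\<lambda>t. mexpt N A t i j) has_vector_derivative mmul N A (mexpt N A t) i j) (at t within S)"
  by (rule has_vector_derivative_real_field[where f = "\<lambda>z. mexp N (\<lambda>a b. z * A a b) i j"])
     (rule has_field_derivative_mexp)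

lemma mexpt_zero: "mexpt N A 0 = mid"
  by (simp add: mexp_zero)

lemma has_vector_derivative_mmul:
  fixes P Q :: "real \<Rightarrow> cmat"
  assumes "\<And>l. l < N \<Longrightarrow> ((\<lambda>s. P s i l) has_vector_derivative P' l) (at t within S)"
      and "\<And>l. l < N \<Longrightarrow> ((\<lambda>s. Q s l j) has_vector_derivative Q' l) (at t within S)"
  shows "((\<lambda>s. mmul N (P s) (Q s) i j) has_vector_derivative
          (\<Sum>l<N. P' l * Q t l j) + (\<Sum>l<N. P t i l * Q' l)) (at t within S)"
  unfolding mmul_def sum.distrib[symmetric]
  by (rule has_vector_derivative_sum, subst add.commute, intro has_vector_derivative_mult assms) auto

lemma has_vector_derivative_zero_eq:
  fixes f :: "real \<Rightarrow> complex"
  assumes "convex S" "\<And>t. t \<in> S \<Longrightarrow> (f has_vector_derivative 0) (at t within S)" "a \<in> S" "b \<in> S"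
  shows "f a = f b"
  using has_vector_derivative_zero_constant[OF assms(1,2)] assms(3,4) by metis

lemma mexpt_uminus_inverse:
  assumes "i < N" "j < N"
  shows "mmul N (mexpt N (\<lambda>a b. - A a b) t) (mexpt N A t) i j = mid i j"
proof -
  let ?F = "mexpt N (\<lambda>a b. - A a b)" and ?G = "mexpt N A"
  have "((\<lambda>s. mmul N (?F s) (?G s) i j) has_vector_derivative 0) (at s)" for s
  proof -
    have "mmul N (mmul N (?F s) A) (?G s) i j = mmul N (mmul N A (?F s)) (?G s) i j"
      by (rule mmul_cong_left) (intro mexp_mcomm mcomm_uminus mcomm_self assms, auto)
    then have "(\<Sum>l<N. mmul N (\<lambda>a b. - A a b) (?F s) i l * ?G s l j) + (\<Sum>l<N. ?F s i l * mmul N A (?G s) l j) = 0"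
      by (simp add: mmul_uminus_left sum_negf mmul_assoc flip: mmul_def)
    moreover have "((\<lambda>s. mmul N (?F s) (?G s) i j) has_vector_derivative
        (\<Sum>l<N. mmul N (\<lambda>a b. - A a b) (?F s) i l * ?G s l j) + (\<Sum>l<N. ?F s i l * mmul N A (?G s) l j)) (at s)"
      by (intro has_vector_derivative_mmul has_vector_derivative_mexpt assms) auto
    ultimately show ?thesis by simp
  qed
  then have "mmul N (?F t) (?G t) i j = mmul N (?F 0) (?G 0) i j"
    by (intro has_vector_derivative_zero_eq[where S = UNIV]) auto
  also have "\<dots> = mid i j"
    using assms by (simp only: mexpt_zero mmul_mid_left)
  finally show ?thesis .
qed


lemma mexpt_inverse:
  assumes "i < N" "j < N"
  shows "mmul N (mexpt N A t) (mexpt N (\<lambda>a b. - A a b) t) i j = mid i j"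
  using mexpt_uminus_inverse[OF assms, where A = "\<lambda>a b. - A a b"] by simp

lemma has_vector_derivative_mexpt_mmul:
  assumes "i < N"
  shows "((\<lambda>t. mmul N (mexpt N B t) X0 i j) has_vector_derivative mmul N B (mmul N (mexpt N B s) X0) i j) (at s within S)"
proof -
  have "((\<lambda>t. mmul N (mexpt N B t) X0 i j) has_vector_derivative
          (\<Sum>l<N. mmul N B (mexpt N B s) i l * X0 l j) + (\<Sum>l<N. mexpt N B s i l * 0)) (at s within S)"
    by (intro has_vector_derivative_mmul has_vector_derivative_mexpt has_vector_derivative_const assms)
  then show ?thesis
    by (simp add: mmul_assoc flip: mmul_def)
qed

lemma has_vector_derivative_mmul_mexpt:
  assumes "j < N"
  shows "((\<lambda>t. mmul N Y0 (mexpt N B t) i j) has_vector_derivative mmul N (mmul N Y0 (mexpt N B s)) B i j) (at s within S)"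
proof -
  have "((\<lambda>t. mmul N Y0 (mexpt N B t) i j) has_vector_derivative
          (\<Sum>l<N. 0 * mexpt N B s l j) + (\<Sum>l<N. Y0 i l * mmul N B (mexpt N B s) l j)) (at s within S)"
    by (intro has_vector_derivative_mmul has_vector_derivative_mexpt has_vector_derivative_const) auto
  moreover have "mmul N Y0 (mmul N B (mexpt N B s)) i j = mmul N Y0 (mmul N (mexpt N B s) B) i j"
    by (rule mmul_cong_right) (rule mexp_mcomm[OF mcomm_self, symmetric], use assms in auto)
  ultimately show ?thesis
    by (simp add: mmul_assoc flip: mmul_def)
qed

text \<open>Uniqueness for \<open>X' = B X\<close> and \<open>Y' = Y B\<close>: the products \<open>exp(-tB) X(t)\<close> and
  \<open>Y(t) exp(-tB)\<close> have zero derivative.\<close>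

lemma left_linear_ode_unique:
  fixes X :: "real \<Rightarrow> cmat"
  assumes S: "convex S" "0 \<in> S" "t \<in> S"
    and X': "\<And>s i j. s \<in> S \<Longrightarrow> i < N \<Longrightarrow> j < N \<Longrightarrow>
              ((\<lambda>u. X u i j) has_vector_derivative mmul N B (X s) i j) (at s within S)"
    and ij: "i < N" "j < N"
  shows "X t i j = mmul N (mexpt N B t) (X 0) i j"
proof -
  let ?F = "mexpt N (\<lambda>a b. - B a b)"
  have const: "mmul N (?F t) (X t) i j = X 0 i j" if ij: "i < N" "j < N" for i j
  proof -
    have "((\<lambda>u. mmul N (?F u) (X u) i j) has_vector_derivative 0) (at s within S)" if s: "s \<in> S" for s
    proof -
      have "mmul N (mmul N (?F s) B) (X s) i j = mmul N (mmul N B (?F s)) (X s) i j"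
        by (rule mmul_cong_left) (intro mexp_mcomm mcomm_uminus[OF mcomm_self] ij, simp)
      then have "(\<Sum>l<N. mmul N (\<lambda>a b. - B a b) (?F s) i l * X s l j) + (\<Sum>l<N. ?F s i l * mmul N B (X s) l j) = 0"
        by (simp add: mmul_uminus_left sum_negf mmul_assoc flip: mmul_def)
      moreover have "((\<lambda>u. mmul N (?F u) (X u) i j) has_vector_derivative
          (\<Sum>l<N. mmul N (\<lambda>a b. - B a b) (?F s) i l * X s l j) + (\<Sum>l<N. ?F s i l * mmul N B (X s) l j)) (at s within S)"
        by (intro has_vector_derivative_mmul has_vector_derivative_mexpt X' s ij)
      ultimately show ?thesis by simp
    qed
    then have "mmul N (?F t) (X t) i j = mmul N (?F 0) (X 0) i j"
      using has_vector_derivative_zero_eq[OF S(1) _ S(3,2)] by blast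
    then show ?thesis
      using ij by (simp add: mexp_zero mmul_mid_left)
  qed
  have "X t i j = mmul N mid (X t) i j"
    using ij by (simp add: mmul_mid_left)
  also have "\<dots> = mmul N (mmul N (mexpt N B t) (?F t)) (X t) i j"
    by (rule mmul_cong_left) (rule mexpt_inverse[symmetric], use ij in auto)
  also have "\<dots> = mmul N (mexpt N B t) (X 0) i j"
    unfolding mmul_assoc by (rule mmul_cong_right) (erule const[OF _ ij(2)])
  finally show ?thesis .
qed

lemma right_linear_ode_unique:
  fixes Y :: "real \<Rightarrow> cmat"
  assumes S: "convex S" "0 \<in> S" "t \<in> S"
    and Y': "\<And>s i j. s \<in> S \<Longrightarrow> i < N \<Longrightarrow> j < N \<Longrightarrow>
              ((\<lambda>u. Y u i j) has_vector_derivative mmul N (Y s) B i j) (at s within S)"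
    and ij: "i < N" "j < N"
  shows "Y t i j = mmul N (Y 0) (mexpt N B t) i j"
proof -
  let ?F = "mexpt N (\<lambda>a b. - B a b)"
  have const: "mmul N (Y t) (?F t) i j = Y 0 i j" if ij: "i < N" "j < N" for i j
  proof -
    have "((\<lambda>u. mmul N (Y u) (?F u) i j) has_vector_derivative 0) (at s within S)" if s: "s \<in> S" for s
    proof -
      have "(\<Sum>l<N. mmul N (Y s) B i l * ?F s l j) + (\<Sum>l<N. Y s i l * mmul N (\<lambda>a b. - B a b) (?F s) l j) = 0"
        by (simp add: mmul_uminus_left sum_negf mmul_assoc flip: mmul_def)
      moreover have "((\<lambda>u. mmul N (Y u) (?F u) i j) has_vector_derivative
          (\<Sum>l<N. mmul N (Y s) B i l * ?F s l j) + (\<Sum>l<N. Y s i l * mmul N (\<lambda>a b. - B a b) (?F s) l j)) (at s within S)"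
        by (intro has_vector_derivative_mmul has_vector_derivative_mexpt Y' s ij)
      ultimately show ?thesis by simp
    qed
    then have "mmul N (Y t) (?F t) i j = mmul N (Y 0) (?F 0) i j"
      using has_vector_derivative_zero_eq[OF S(1) _ S(3,2)] by blast
    then show ?thesis
      using ij by (simp add: mexp_zero mmul_mid_right)
  qed
  have "Y t i j = mmul N (Y t) mid i j"
    using ij by (simp add: mmul_mid_right)
  also have "\<dots> = mmul N (Y t) (mmul N (?F t) (mexpt N B t)) i j"
    by (rule mmul_cong_right) (rule mexpt_uminus_inverse[symmetric], use ij in auto)
  also have "\<dots> = mmul N (Y 0) (mexpt N B t) i j"
    unfolding mmul_assoc[symmetric] by (rule mmul_cong_left) (erule const[OF ij(1)])
  finally show ?thesis .
qed


section \<open>Block matrices\<close>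

definition blk :: "nat \<Rightarrow> nat \<Rightarrow> cmat \<Rightarrow> cmat" where
  "blk n r D a b = (if a div n = r \<and> b div n = r then D (a mod n) (b mod n) else 0)"

lemma block_indices_eq:
  fixes r m n :: nat
  assumes "r < m" "0 < n"
  shows "{l \<in> {..<n*m}. l div n = r} = (\<lambda>l. r*n + l) ` {..<n}"
proof (intro equalityI subsetI)
  fix l assume "l \<in> {l \<in> {..<n*m}. l div n = r}"
  then have "l = r*n + l mod n" "l mod n < n"
    using assms(2) div_mult_mod_eq[of l n] by auto
  then show "l \<in> (\<lambda>l. r*n + l) ` {..<n}" by blast
next
  fix x assume "x \<in> (\<lambda>l. r*n + l) ` {..<n}"
  then obtain l where l: "l < n" "x = r*n + l" by auto
  have "r*n + l < (r + 1) * n" using l by simp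
  also have "\<dots> \<le> n*m" using mult_le_mono1[of "r + 1" m n] assms by (simp add: mult.commute)
  finally show "x \<in> {l \<in> {..<n*m}. l div n = r}" using l by simp
qed

lemma sum_block:
  fixes f :: "nat \<Rightarrow> complex"
  assumes "r < m" "0 < n"
  shows "(\<Sum>l<n*m. if l div n = r then f l else 0) = (\<Sum>l<n. f (r*n + l))"
proof -
  have "(\<Sum>l<n*m. if l div n = r then f l else 0) = sum f {l \<in> {..<n*m}. l div n = r}"
    using sum.inter_filter[of "{..<n*m}" f "\<lambda>l. l div n = r"] by simp
  also have "\<dots> = (\<Sum>l<n. f (r*n + l))"
    unfolding block_indices_eq[OF assms] by (subst sum.reindex) (auto simp: inj_on_def)
  finally show ?thesis .
qed

lemma mmul_blk_left:
  assumes "r < m" "0 < n"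
  shows "mmul (n*m) (blk n r D) B a b = (if a div n = r then (\<Sum>l<n. D (a mod n) l * B (r*n + l) b) else 0)"
proof -
  have "mmul (n*m) (blk n r D) B a b
      = (if a div n = r then (\<Sum>l<n*m. if l div n = r then D (a mod n) (l mod n) * B l b else 0) else 0)"
    unfolding mmul_def blk_def by (auto intro: sum.cong)
  then show ?thesis
    by (simp add: sum_block[OF assms])
qed

lemma mmul_blk_right:
  assumes "r < m" "0 < n"
  shows "mmul (n*m) A (blk n r D) a b = (if b div n = r then (\<Sum>l<n. A a (r*n + l) * D l (b mod n)) else 0)"
proof -
  have "mmul (n*m) A (blk n r D) a b
      = (if b div n = r then (\<Sum>l<n*m. if l div n = r then A a l * D (l mod n) (b mod n) else 0) else 0)"
    unfolding mmul_def blk_def by (auto intro: sum.cong)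
  then show ?thesis
    by (simp add: sum_block[OF assms])
qed

lemma mmul_blk_blk:
  assumes "r < m" "0 < n"
  shows "mmul (n*m) (blk n r D) (blk n r E) = blk n r (mmul n D E)"
proof (intro ext)
  fix a b
  show "mmul (n*m) (blk n r D) (blk n r E) a b = blk n r (mmul n D E) a b"
    unfolding mmul_blk_left[OF assms] by (auto simp: blk_def mmul_def intro!: sum.cong)
qed

lemma block_index_eq_iff: "(l::nat) < n \<Longrightarrow> r*n + l = b \<longleftrightarrow> b div n = r \<and> l = b mod n"
  by (auto simp: mult.commute[of n] intro: div_mult_mod_eq)

lemma mmul_blk_mid:
  assumes "r < m" "0 < n"
  shows "mmul (n*m) (blk n r D) mid = blk n r D"
proof (intro ext)
  fix a b
  have "(\<Sum>l<n. D (a mod n) l * mid (r*n + l) b) = (if b div n = r then D (a mod n) (b mod n) else 0)"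
    using assms(2) by (simp add: mid_def block_index_eq_iff if_distrib[of "\<lambda>x. _ * x"] cong: if_cong)
  then show "mmul (n*m) (blk n r D) mid a b = blk n r D a b"
    by (simp add: mmul_blk_left[OF assms] blk_def)
qed

lemma mpow_blk:
  assumes "r < m" "0 < n" "q \<ge> 1"
  shows "mpow (n*m) (blk n r D) q = blk n r (mpow n D q)"
  using assms(3)
proof (induction q rule: dec_induct)
  case base
  have "blk n r (mmul n D mid) = blk n r D"
    by (intro ext) (simp add: blk_def mmul_mid_right assms(2))
  then show ?case
    by (simp add: mmul_blk_mid[OF assms(1,2)])
next
  case (step q)
  then show ?case by (simp add: mmul_blk_blk[OF assms(1,2)])
qed

lemma trace_blk:
  assumes "r < m" "0 < n"
  shows "(\<Sum>a<n*m. blk n r E a a) = (\<Sum>l<n. E l l)"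
  using sum_block[OF assms, of "\<lambda>a. E (a mod n) (a mod n)"] by (simp add: blk_def)

lemma scalar_blk: "(\<lambda>i j. c * blk n r D i j) = blk n r (\<lambda>i j. c * D i j)"
  by (intro ext) (simp add: blk_def)

definition blk_id :: "nat \<Rightarrow> nat \<Rightarrow> cmat \<Rightarrow> cmat" where
  "blk_id n r G a b = (if a div n = r \<and> b div n = r then G (a mod n) (b mod n) else mid a b)"

lemma mexp_blk:
  assumes "r < m" "0 < n"
  shows "mexp (n*m) (blk n r D) = blk_id n r (mexp n D)"
proof (intro ext)
  fix a b
  show "mexp (n*m) (blk n r D) a b = blk_id n r (mexp n D) a b"
  proof (cases "a div n = r \<and> b div n = r")
    case True
    have "mpow (n*m) (blk n r D) q a b = mpow n D q (a mod n) (b mod n)" for q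
    proof (cases "q = 0")
      case True
      have "a = b \<longleftrightarrow> a mod n = b mod n"
        using \<open>a div n = r \<and> b div n = r\<close> by (metis div_mult_mod_eq)
      then show ?thesis using True by (simp add: mid_def)
    next
      case False
      then show ?thesis
        using mpow_blk[OF assms, of q D] True by (simp add: blk_def)
    qed
    then show ?thesis
      using True by (simp add: mexp_def blk_id_def)
  next
    case False
    have "mpow (n*m) (blk n r D) q a b / of_nat (fact q) = (if q = 0 then mid a b else 0)" for q
      using mpow_blk[OF assms, of q D] False by (cases "q = 0") (auto simp: blk_def)
    then have "mexp (n*m) (blk n r D) a b = (\<Sum>q. if q = 0 then mid a b else 0)"
      by (simp add: mexp_def)
    also have "\<dots> = mid a b"
      using sums_single[of 0 "\<lambda>_. mid a b"] by (simp add: sums_iff)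
    finally show ?thesis
      by (simp only: blk_id_def if_not_P[OF False])
  qed
qed


definition mtr :: "nat \<Rightarrow> cmat \<Rightarrow> complex" where
  "mtr n X = (\<Sum>l<n. X l l)"

lemma mtr_mmul_commute: "mtr n (mmul n X Y) = mtr n (mmul n Y X)"
  unfolding mtr_def mmul_def by (subst sum.swap) (simp add: mult.commute)

lemma mtr_add: "mtr n (\<lambda>a b. X a b + Y a b) = mtr n X + mtr n Y"
  unfolding mtr_def by (simp add: sum.distrib)

definition has_mderiv :: "nat \<Rightarrow> (complex \<Rightarrow> cmat) \<Rightarrow> cmat \<Rightarrow> complex \<Rightarrow> bool" where
  "has_mderiv n M M' z \<longleftrightarrow> (\<forall>a<n. \<forall>b<n. ((\<lambda>w. M w a b) has_field_derivative M' a b) (at z))"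

lemma has_mderiv_mmul:
  assumes "has_mderiv n A A' z" "has_mderiv n B B' z"
  shows "has_mderiv n (\<lambda>w. mmul n (A w) (B w)) (\<lambda>a b. mmul n A' (B z) a b + mmul n (A z) B' a b) z"
  unfolding has_mderiv_def
proof (intro allI impI)
  fix a b assume ab: "a < n" "b < n"
  have "((\<lambda>w. \<Sum>l<n. A w a l * B w l b) has_field_derivative (\<Sum>l<n. A' a l * B z l b + B' l b * A z a l)) (at z)"
    by (intro DERIV_sum DERIV_mult) (use assms ab in \<open>auto simp: has_mderiv_def\<close>)
  then show "((\<lambda>w. mmul n (A w) (B w) a b) has_field_derivative mmul n A' (B z) a b + mmul n (A z) B' a b) (at z)"
    by (simp add: mmul_def sum.distrib mult.commute)
qed

primrec mpow_deriv :: "nat \<Rightarrow> cmat \<Rightarrow> cmat \<Rightarrow> nat \<Rightarrow> cmat" where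
  "mpow_deriv n M M' 0 = (\<lambda>a b. 0)"
| "mpow_deriv n M M' (Suc q) = (\<lambda>a b. mmul n M' (mpow n M q) a b + mmul n M (mpow_deriv n M M' q) a b)"

lemma has_mderiv_mpow:
  assumes "has_mderiv n M M' z"
  shows "has_mderiv n (\<lambda>w. mpow n (M w) q) (mpow_deriv n (M z) M' q) z"
proof (induction q)
  case 0
  then show ?case by (simp add: has_mderiv_def)
next
  case (Suc q)
  show ?case using has_mderiv_mmul[OF assms Suc] by simp
qed

text \<open>The extra factor \<open>C\<close>, commuting with \<open>M\<close>, makes the induction go through.\<close>

lemma mtr_mpow_deriv:
  assumes "mcomm n C M"
  shows "mtr n (mmul n C (mpow_deriv n M M' q)) = of_nat q * mtr n (mmul n C (mmul n (mpow n M (q - 1)) M'))"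
  using assms
proof (induction q arbitrary: C)
  case 0
  then show ?case by (simp add: mtr_def mmul_def)
next
  case (Suc q)
  let ?P = "mpow n M q"
  have "mtr n (mmul n C (mmul n M' ?P)) = mtr n (mmul n ?P (mmul n C M'))"
    by (simp only: mmul_assoc[symmetric] mtr_mmul_commute)
  also have "\<dots> = mtr n (mmul n (mmul n C ?P) M')"
  proof -
    have "mcomm n ?P C"
      using mcomm_mpow Suc.prems by (auto simp: mcomm_def meq_def)
    then have "mmul n (mmul n ?P C) M' a a = mmul n (mmul n C ?P) M' a a" if "a < n" for a
      using that by (auto simp: mcomm_def meq_def intro!: mmul_cong_left)
    then show ?thesis
      by (simp add: mtr_def mmul_assoc[symmetric])
  qed
  finally have first: "mtr n (mmul n C (mmul n M' ?P)) = mtr n (mmul n C (mmul n ?P M'))"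
    by (simp only: mmul_assoc)
  have "mtr n (mmul n C (mmul n M (mpow_deriv n M M' q)))
      = of_nat q * mtr n (mmul n (mmul n C M) (mmul n (mpow n M (q - 1)) M'))"
    using Suc.IH[OF mcomm_mmul[OF Suc.prems]] by (simp only: mmul_assoc)
  also have "\<dots> = of_nat q * mtr n (mmul n C (mmul n ?P M'))"
    by (cases q) (simp_all add: mmul_assoc)
  finally have second: "mtr n (mmul n C (mmul n M (mpow_deriv n M M' q))) = of_nat q * mtr n (mmul n C (mmul n ?P M'))" .
  have "mmul n C (mpow_deriv n M M' (Suc q))
      = (\<lambda>a b. mmul n C (mmul n M' ?P) a b + mmul n C (mmul n M (mpow_deriv n M M' q)) a b)"
    by (intro ext) (simp add: mmul_add_right)
  then show ?case
    using first second by (simp add: mtr_add algebra_simps)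
qed

lemma has_field_derivative_trace_mpow:
  assumes "has_mderiv n M M' z" "k \<ge> 1"
  shows "((\<lambda>w. (1 / of_nat k) * (\<Sum>l<n. mpow n (M w) k l l)) has_field_derivative
           mtr n (mmul n (mpow n (M z) (k - 1)) M')) (at z)"
proof -
  have "((\<lambda>w. (1 / of_nat k) * (\<Sum>l<n. mpow n (M w) k l l)) has_field_derivative
           (1 / of_nat k) * mtr n (mpow_deriv n (M z) M' k)) (at z)"
    unfolding mtr_def
    by (intro DERIV_cmult DERIV_sum) (use has_mderiv_mpow[OF assms(1), of k] in \<open>auto simp: has_mderiv_def\<close>)
  moreover have "mtr n X = mtr n (mmul n mid X)" for X
    by (simp add: mtr_def mmul_mid_left)
  moreover have "mcomm n mid (M z)"
    by (simp add: mcomm_def meq_def mmul_mid_left mmul_mid_right)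
  ultimately show ?thesis
    using mtr_mpow_deriv[of n mid "M z" M' k] assms(2) by simp
qed


section \<open>The gradient of the Hamiltonian\<close>

definition Tmat :: "nat \<Rightarrow> nat \<Rightarrow> point \<Rightarrow> cmat" where
  "Tmat n r p i j = mid i j + mmul n (MX p r) (MY p r) i j"

lemma Tmat_eq: "Tmat n r p = (\<lambda>i j. mid i j + mmul n (MX p r) (MY p r) i j)"
  by (intro ext) (simp add: Tmat_def)

lemma Tbig_eq_blk: "Tbig n p r = blk n r (Tmat n r p)"
  by (intro ext) (simp add: Tbig_def blk_def Tmat_def)

lemma Fham_eq:
  assumes "r < m" "0 < n" "k \<ge> 1"
  shows "Fham m n r k p = (1 / of_nat k) * (\<Sum>l<n. mpow n (Tmat n r p) k l l)"
  unfolding Fham_def Tbig_eq_blk mpow_blk[OF assms] trace_blk[OF assms(1,2)] ..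

text \<open>The transposed gradients: \<open>\<partial>F/\<partial>(X_r)_{ij} = (Y_r T_r^{k-1})_{ji}\<close> and
  \<open>\<partial>F/\<partial>(Y_r)_{ij} = (T_r^{k-1} X_r)_{ji}\<close>.\<close>

definition gradX :: "nat \<Rightarrow> nat \<Rightarrow> nat \<Rightarrow> point \<Rightarrow> cmat" where
  "gradX n r k p = mmul n (MY p r) (mpow n (Tmat n r p) (k - 1))"

definition gradY :: "nat \<Rightarrow> nat \<Rightarrow> nat \<Rightarrow> point \<Rightarrow> cmat" where
  "gradY n r k p = mmul n (mpow n (Tmat n r p) (k - 1)) (MX p r)"

lemma pdiff_Fham:
  assumes "r < m" "0 < n" "k \<ge> 1"
    and "has_mderiv n (\<lambda>z. Tmat n r (p(c := z))) M' (p c)"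
  shows "pdiff c (Fham m n r k) p = mtr n (mmul n (mpow n (Tmat n r p) (k - 1)) M')"
proof -
  have "(\<lambda>z. Fham m n r k (p(c := z))) = (\<lambda>z. (1 / of_nat k) * (\<Sum>l<n. mpow n (Tmat n r (p(c := z))) k l l))"
    by (intro ext) (rule Fham_eq[OF assms(1-3)])
  with has_field_derivative_trace_mpow[OF assms(4,3)] show ?thesis
    unfolding pdiff_def by (simp add: DERIV_imp_deriv)
qed

lemma DERIV_if_ident: "((\<lambda>z. if P then z else K) has_field_derivative (if P then 1 else 0)) (at x)"
  by (cases P) auto

lemma has_mderiv_Tmat_CX:
  assumes "i < n" "j < n"
  shows "has_mderiv n (\<lambda>z. Tmat n r (p(CX r i j := z))) (\<lambda>a b. if a = i then MY p r j b else 0) (p (CX r i j))"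
  unfolding has_mderiv_def
proof (intro allI impI)
  fix a b
  have "(\<lambda>z. Tmat n r (p(CX r i j := z)) a b)
      = (\<lambda>z. mid a b + (\<Sum>l<n. (if a = i \<and> l = j then z else p (CX r a l)) * p (CY r l b)))"
    by (intro ext) (auto simp: Tmat_def mmul_def MX_def MY_def intro!: sum.cong)
  moreover have "((\<lambda>z. mid a b + (\<Sum>l<n. (if a = i \<and> l = j then z else p (CX r a l)) * p (CY r l b)))
      has_field_derivative (\<Sum>l<n. (if a = i \<and> l = j then 1 else 0) * p (CY r l b))) (at (p (CX r i j)))"
    by (auto intro!: derivative_eq_intros DERIV_if_ident)
  moreover have "(\<Sum>l<n. (if a = i \<and> l = j then 1 else 0) * p (CY r l b)) = (if a = i then MY p r j b else 0)"
    using assms by (simp add: MY_def if_distrib[of "\<lambda>x. x * _"] cong: if_cong)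
  ultimately show "((\<lambda>z. Tmat n r (p(CX r i j := z)) a b) has_field_derivative (if a = i then MY p r j b else 0))
      (at (p (CX r i j)))"
    by simp
qed

lemma has_mderiv_Tmat_CY:
  assumes "i < n" "j < n"
  shows "has_mderiv n (\<lambda>z. Tmat n r (p(CY r i j := z))) (\<lambda>a b. if b = j then MX p r a i else 0) (p (CY r i j))"
  unfolding has_mderiv_def
proof (intro allI impI)
  fix a b
  have "(\<lambda>z. Tmat n r (p(CY r i j := z)) a b)
      = (\<lambda>z. mid a b + (\<Sum>l<n. p (CX r a l) * (if l = i \<and> b = j then z else p (CY r l b))))"
    by (intro ext) (auto simp: Tmat_def mmul_def MX_def MY_def intro!: sum.cong)
  moreover have "((\<lambda>z. mid a b + (\<Sum>l<n. p (CX r a l) * (if l = i \<and> b = j then z else p (CY r l b))))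
      has_field_derivative (\<Sum>l<n. (if l = i \<and> b = j then 1 else 0) * p (CX r a l))) (at (p (CY r i j)))"
    by (auto intro!: derivative_eq_intros DERIV_if_ident)
  moreover have "(\<Sum>l<n. (if l = i \<and> b = j then 1 else 0) * p (CX r a l)) = (if b = j then MX p r a i else 0)"
    using assms by (simp add: MX_def if_distrib[of "\<lambda>x. x * _"] cong: if_cong)
  ultimately show "((\<lambda>z. Tmat n r (p(CY r i j := z)) a b) has_field_derivative (if b = j then MX p r a i else 0))
      (at (p (CY r i j)))"
    by simp
qed

lemma pdiff_Fham_CX:
  assumes "r < m" "0 < n" "k \<ge> 1" "i < n" "j < n"
  shows "pdiff (CX r i j) (Fham m n r k) p = gradX n r k p j i"
proof -
  have "(\<Sum>a<n. mpow n (Tmat n r p) (k - 1) l a * (if a = i then MY p r j l else 0))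
      = mpow n (Tmat n r p) (k - 1) l i * MY p r j l" for l
    using assms(4) by (simp add: if_distrib[of "\<lambda>x. _ * x"] cong: if_cong)
  then show ?thesis
    unfolding pdiff_Fham[OF assms(1-3) has_mderiv_Tmat_CX[OF assms(4,5)]]
    by (simp add: mtr_def mmul_def gradX_def mult.commute)
qed

lemma pdiff_Fham_CY:
  assumes "r < m" "0 < n" "k \<ge> 1" "i < n" "j < n"
  shows "pdiff (CY r i j) (Fham m n r k) p = gradY n r k p j i"
proof -
  have "(\<Sum>l<n. \<Sum>a<n. mpow n (Tmat n r p) (k - 1) l a * (if l = j then MX p r a i else 0))
      = (\<Sum>l<n. if l = j then (\<Sum>a<n. mpow n (Tmat n r p) (k - 1) l a * MX p r a i) else 0)"
    by (rule sum.cong) auto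
  then show ?thesis
    unfolding pdiff_Fham[OF assms(1-3) has_mderiv_Tmat_CY[OF assms(4,5)]]
    using assms(5) by (simp add: mtr_def mmul_def gradY_def)
qed

lemma pdiff_Fham_other:
  assumes "\<And>a b. c \<noteq> CX r a b" "\<And>a b. c \<noteq> CY r a b"
  shows "pdiff c (Fham m n r k) p = 0"
proof -
  have "CX r a b \<noteq> c" "CY r a b \<noteq> c" for a b
    using assms by metis+
  then have "Tbig n (p(c := z)) r = Tbig n p r" for z
    by (intro ext) (simp add: Tbig_def mmul_def MX_def MY_def)
  then show ?thesis
    unfolding pdiff_def Fham_def by (simp add: DERIV_imp_deriv)
qed

lemma finite_coord_family:
  fixes C :: "nat \<Rightarrow> nat \<Rightarrow> nat \<Rightarrow> coord"
  shows "finite {C s a j | s a j. s < m \<and> a \<le> K \<and> j \<le> K}"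
proof (rule finite_subset)
  show "{C s a j | s a j. s < m \<and> a \<le> K \<and> j \<le> K} \<subseteq> (\<lambda>(s, a, j). C s a j) ` ({..<m} \<times> {..K} \<times> {..K})"
    by force
  show "finite ((\<lambda>(s, a, j). C s a j) ` ({..<m} \<times> {..K} \<times> {..K}))"
    by (intro finite_imageI finite_cartesian_product) simp_all
qed

lemma finite_coords: "finite (coords m n d)"
proof -
  let ?K = "n + (\<Sum>s<m. d s)"
  have "d s \<le> ?K" if "s < m" for s
    using that member_le_sum[of s "{..<m}" d] by auto
  then have "coords m n d \<subseteq> {CX s a j | s a j. s < m \<and> a \<le> ?K \<and> j \<le> ?K} \<union> {CY s a j | s a j. s < m \<and> a \<le> ?K \<and> j \<le> ?K}
      \<union> {CV s a j | s a j. s < m \<and> a \<le> ?K \<and> j \<le> ?K} \<union> {CW s a j | s a j. s < m \<and> a \<le> ?K \<and> j \<le> ?K}"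
    unfolding coords_def by fastforce
  then show ?thesis
    by (rule finite_subset) (intro finite_UnI finite_coord_family)
qed

definition contract :: "nat \<Rightarrow> cmat \<Rightarrow> cmat \<Rightarrow> complex" where
  "contract n A f = (\<Sum>i<n. \<Sum>j<n. A j i * f i j)"

lemma sum_coord_grid:
  fixes g :: "coord \<Rightarrow> complex"
  assumes "inj_on (\<lambda>(i, j). C i j) ({..<n} \<times> {..<n})"
  shows "sum g ((\<lambda>(i, j). C i j) ` ({..<n} \<times> {..<n})) = (\<Sum>i<n. \<Sum>j<n. g (C i j))"
  by (subst sum.reindex[OF assms]) (simp add: sum.cartesian_product case_prod_unfold)

lemma ham_Fham_eq_contract:
  assumes "r < m" "0 < n" "k \<ge> 1"
  shows "ham m n d (Fham m n r k) c p
     = contract n (gradX n r k p) (\<lambda>i j. br m n (CX r i j) c p)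
     + contract n (gradY n r k p) (\<lambda>i j. br m n (CY r i j) c p)"
proof -
  let ?g = "\<lambda>c'. pdiff c' (Fham m n r k) p * br m n c' c p"
  let ?SX = "(\<lambda>(i, j). CX r i j) ` ({..<n} \<times> {..<n})"
  let ?SY = "(\<lambda>(i, j). CY r i j) ` ({..<n} \<times> {..<n})"
  have sub: "?SX \<union> ?SY \<subseteq> coords m n d"
    using assms(1) by (auto simp: coords_def)
  have "?g c' = 0" if "c' \<in> coords m n d - (?SX \<union> ?SY)" for c'
  proof -
    have "c' \<noteq> CX r a b" "c' \<noteq> CY r a b" for a b
      using that by (auto simp: coords_def)
    then show ?thesis by (simp add: pdiff_Fham_other)
  qed
  then have "ham m n d (Fham m n r k) c p = sum ?g (?SX \<union> ?SY)"
    unfolding ham_def by (intro sum.mono_neutral_right[OF finite_coords sub]) auto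
  also have "\<dots> = sum ?g ?SX + sum ?g ?SY"
    by (rule sum.union_disjoint) auto
  also have "\<dots> = (\<Sum>i<n. \<Sum>j<n. ?g (CX r i j)) + (\<Sum>i<n. \<Sum>j<n. ?g (CY r i j))"
    by (simp add: sum_coord_grid inj_on_def)
  also have "\<dots> = contract n (gradX n r k p) (\<lambda>i j. br m n (CX r i j) c p)
                   + contract n (gradY n r k p) (\<lambda>i j. br m n (CY r i j) c p)"
    unfolding contract_def
    by (intro arg_cong2[where f = "(+)"] sum.cong refl) (simp_all add: pdiff_Fham_CX[OF assms] pdiff_Fham_CY[OF assms])
  finally show ?thesis .
qed


lemma contract_add: "contract n A (\<lambda>i j. f i j + g i j) = contract n A f + contract n A g"
  unfolding contract_def by (simp add: distrib_left sum.distrib)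

lemma contract_scalar: "contract n A (\<lambda>i j. c * f i j) = c * contract n A f"
  unfolding contract_def by (simp add: sum_distrib_left mult.left_commute)

lemma sum_mult_dl: "l < n \<Longrightarrow> (\<Sum>i<n. f i * dl i l) = f l"
  by (simp add: dl_def if_distrib[of "\<lambda>x. _ * x"] cong: if_cong)

lemma sum_dl_mult: "k < n \<Longrightarrow> (\<Sum>j<n. dl k j * f j) = f k"
  by (simp add: dl_def if_distrib[of "\<lambda>x. x * _"] cong: if_cong)

lemma contract_dl_dl: "k < n \<Longrightarrow> l < n \<Longrightarrow> contract n A (\<lambda>i j. dl i l * dl k j) = A k l"
proof -
  assume kl: "k < n" "l < n"
  have "contract n A (\<lambda>i j. dl i l * dl k j) = (\<Sum>i<n. (\<Sum>j<n. dl k j * A j i) * dl i l)"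
    unfolding contract_def by (simp add: sum_distrib_right sum_distrib_left ac_simps)
  then show ?thesis
    by (simp add: sum_mult_dl[OF kl(2)] sum_dl_mult[OF kl(1)])
qed

lemma contract_row_dl: "l < n \<Longrightarrow> contract n A (\<lambda>i j. C k j * dl i l) = mmul n C A k l"
proof -
  assume l: "l < n"
  have "contract n A (\<lambda>i j. C k j * dl i l) = (\<Sum>i<n. (\<Sum>j<n. C k j * A j i) * dl i l)"
    unfolding contract_def by (simp add: sum_distrib_right sum_distrib_left ac_simps)
  then show ?thesis
    by (simp add: sum_mult_dl[OF l] mmul_def)
qed

lemma contract_dl_col: "k < n \<Longrightarrow> contract n A (\<lambda>i j. dl k j * D i l) = mmul n A D k l"
proof -
  assume k: "k < n"
  have "contract n A (\<lambda>i j. dl k j * D i l) = (\<Sum>i<n. \<Sum>j<n. dl k j * (A j i * D i l))"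
    unfolding contract_def by (simp add: ac_simps)
  then show ?thesis
    by (simp add: sum_dl_mult[OF k] mmul_def)
qed

lemma contract_row_col: "contract n A (\<lambda>i j. C k j * D i l) = mmul n (mmul n C A) D k l"
  unfolding contract_def mmul_def by (simp add: sum_distrib_right sum_distrib_left ac_simps)

lemma predm_sucm: "r < m \<Longrightarrow> predm m (sucm m r) = r"
  by (cases "Suc r = m") (auto simp: sucm_def predm_def)

lemma sucm_predm: "s < m \<Longrightarrow> sucm m (predm m s) = s"
  by (cases s) (auto simp: sucm_def predm_def)

lemma predm_eq_iff: "r < m \<Longrightarrow> s < m \<Longrightarrow> r = predm m s \<longleftrightarrow> s = sucm m r"
  using predm_sucm sucm_predm by metis

lemma sucm_neq: "r < m \<Longrightarrow> 2 \<le> m \<Longrightarrow> sucm m r \<noteq> r"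
  by (cases "Suc r = m") (auto simp: sucm_def)

lemma predm_neq: "r < m \<Longrightarrow> 2 \<le> m \<Longrightarrow> predm m r \<noteq> r"
  using predm_eq_iff sucm_neq by metis

lemma dl_self: "dl a a = 1"
  by (simp add: dl_def)

lemma dl_neq: "a \<noteq> b \<Longrightarrow> dl a b = 0"
  by (simp add: dl_def)

lemma mcomm_mpow_Tmat: "mcomm n (mpow n (Tmat n r p) q) (mmul n (MX p r) (MY p r))"
  unfolding Tmat_eq by (rule mcomm_mpow[OF mcomm_mid_plus])

lemma gradX_X: "mmul n (gradX n r k p) (MX p r) = mmul n (MY p r) (gradY n r k p)"
  unfolding gradX_def gradY_def by (simp only: mmul_assoc)

lemma X_gradX:
  assumes "i < n" "j < n"
  shows "mmul n (MX p r) (gradX n r k p) i j = mmul n (gradY n r k p) (MY p r) i j"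
proof -
  have "mmul n (MX p r) (gradX n r k p) i j = mmul n (mmul n (MX p r) (MY p r)) (mpow n (Tmat n r p) (k - 1)) i j"
    unfolding gradX_def by (simp only: mmul_assoc)
  also have "\<dots> = mmul n (mpow n (Tmat n r p) (k - 1)) (mmul n (MX p r) (MY p r)) i j"
    using mcomm_mpow_Tmat assms by (auto simp: mcomm_def meq_def)
  finally show ?thesis
    unfolding gradY_def by (simp only: mmul_assoc)
qed

lemma X_gradX_mmul:
  "i < n \<Longrightarrow> mmul n (mmul n (MX p r) (gradX n r k p)) C i j = mmul n (mmul n (gradY n r k p) (MY p r)) C i j"
  by (rule mmul_cong_left) (simp add: X_gradX)

lemma mmul_X_gradX:
  "j < n \<Longrightarrow> mmul n C (mmul n (MX p r) (gradX n r k p)) i j = mmul n C (mmul n (gradY n r k p) (MY p r)) i j"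
  by (rule mmul_cong_right) (simp add: X_gradX)

lemma mpow_Tmat_pred:
  assumes "k \<ge> 1" "i < n" "j < n"
  shows "mmul n (mpow n (Tmat n r p) (k - 1)) (Tmat n r p) i j = mpow n (Tmat n r p) k i j"
  using mpow_Suc_right[OF assms(2,3), of "Tmat n r p" "k - 1"] assms(1) by simp

text \<open>The diagonal terms of the bracket assemble \<open>T_r^k X_r\<close> and \<open>Y_r T_r^k\<close>, using that
  \<open>T_r^{k-1}\<close> commutes with \<open>X_r Y_r\<close>.\<close>

lemma gradY_assemble:
  assumes "k \<ge> 1" "a < n" "b < n"
  shows "gradY n r k p a b + 1/2 * mmul n (gradY n r k p) (mmul n (MY p r) (MX p r)) a b
       + 1/2 * mmul n (mmul n (MX p r) (MY p r)) (gradY n r k p) a b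
     = mmul n (mpow n (Tmat n r p) k) (MX p r) a b"
proof -
  let ?X = "MX p r" and ?Y = "MY p r" and ?P = "mpow n (Tmat n r p) (k - 1)" and ?B = "gradY n r k p"
  have "mmul n (mmul n ?X ?Y) ?B a b = mmul n (mmul n (mmul n ?X ?Y) ?P) ?X a b"
    unfolding gradY_def by (simp only: mmul_assoc)
  also have "\<dots> = mmul n (mmul n ?P (mmul n ?X ?Y)) ?X a b"
    by (rule mmul_cong_left) (use mcomm_mpow_Tmat assms in \<open>auto simp: mcomm_def meq_def\<close>)
  finally have comm: "mmul n (mmul n ?X ?Y) ?B a b = mmul n ?B (mmul n ?Y ?X) a b"
    unfolding gradY_def by (simp only: mmul_assoc)
  have "mmul n (mpow n (Tmat n r p) k) ?X a b = mmul n (mmul n ?P (Tmat n r p)) ?X a b"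
    by (rule mmul_cong_left) (use mpow_Tmat_pred assms in auto)
  also have "\<dots> = mmul n ?P (mmul n (Tmat n r p) ?X) a b"
    by (simp only: mmul_assoc)
  also have "\<dots> = mmul n ?P (\<lambda>i j. ?X i j + mmul n (mmul n ?X ?Y) ?X i j) a b"
    by (rule mmul_cong_right) (simp add: Tmat_eq mmul_add_left mmul_mid_left)
  also have "\<dots> = ?B a b + mmul n ?B (mmul n ?Y ?X) a b"
    unfolding mmul_add_right gradY_def by (simp add: mmul_assoc)
  finally show ?thesis
    using comm by simp
qed

lemma gradX_assemble:
  assumes "k \<ge> 1" "a < n" "b < n"
  shows "gradX n r k p a b + 1/2 * mmul n (mmul n (MY p r) (MX p r)) (gradX n r k p) a b
       + 1/2 * mmul n (gradX n r k p) (mmul n (MX p r) (MY p r)) a b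
     = mmul n (MY p r) (mpow n (Tmat n r p) k) a b"
proof -
  let ?X = "MX p r" and ?Y = "MY p r" and ?P = "mpow n (Tmat n r p) (k - 1)" and ?A = "gradX n r k p"
  have "mmul n (mmul n ?Y ?X) ?A a b = mmul n ?Y (mmul n (mmul n ?X ?Y) ?P) a b"
    unfolding gradX_def by (simp only: mmul_assoc)
  also have "\<dots> = mmul n ?Y (mmul n ?P (mmul n ?X ?Y)) a b"
    by (rule mmul_cong_right) (use mcomm_mpow_Tmat assms in \<open>auto simp: mcomm_def meq_def\<close>)
  finally have comm: "mmul n (mmul n ?Y ?X) ?A a b = mmul n ?A (mmul n ?X ?Y) a b"
    unfolding gradX_def by (simp only: mmul_assoc)
  have "mmul n ?Y (mpow n (Tmat n r p) k) a b = mmul n ?Y (mmul n ?P (Tmat n r p)) a b"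
    by (rule mmul_cong_right) (use mpow_Tmat_pred assms in auto)
  also have "\<dots> = mmul n ?A (Tmat n r p) a b"
    unfolding gradX_def by (simp only: mmul_assoc)
  also have "\<dots> = ?A a b + mmul n ?A (mmul n ?X ?Y) a b"
    using assms by (simp add: Tmat_eq mmul_add_right mmul_mid_right)
  finally show ?thesis
    using comm by simp
qed


text \<open>Vectors are encoded as matrices with constant columns (rows), so that the matrix identities
  above apply to them.\<close>

definition col_mat :: "(nat \<Rightarrow> complex) \<Rightarrow> cmat" where
  "col_mat w i l = w i"

definition row_mat :: "(nat \<Rightarrow> complex) \<Rightarrow> cmat" where
  "row_mat v k j = v j"

lemma ham_Fham_CY:
  assumes "r < m" "2 \<le> m" "0 < n" "k \<ge> 1" "s < m" "a < n" "b < n"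
  shows "ham m n d (Fham m n r k) (CY s a b) p = (if s = r then mmul n (MY p r) (mpow n (Tmat n r p) k) a b else 0)"
proof -
  let ?X = "MX p r" and ?Y = "MY p r" and ?A = "gradX n r k p" and ?B = "gradY n r k p"
  let ?pr = "predm m r" and ?sr = "sucm m r"
  have brX: "(\<lambda>i j. br m n (CX r i j) (CY s a b) p) = (\<lambda>i j. dl s r * (dl i b * dl a j)
     + (1/2 * dl s r) * (mmul n ?Y ?X a j * dl i b) + (1/2 * dl s r) * (dl a j * mmul n ?X ?Y i b)
     + (-(1/2) * dl s ?pr) * (?X a j * MY p ?pr i b) + (1/2 * dl s ?sr) * (MY p ?sr a j * ?X i b))"
    by (intro ext) (simp add: br_def algebra_simps)
  have contrX: "contract n ?A (\<lambda>i j. br m n (CX r i j) (CY s a b) p) = dl s r * ?A a b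
     + (1/2 * dl s r) * mmul n (mmul n ?Y ?X) ?A a b + (1/2 * dl s r) * mmul n ?A (mmul n ?X ?Y) a b
     + (-(1/2) * dl s ?pr) * mmul n (mmul n ?X ?A) (MY p ?pr) a b + (1/2 * dl s ?sr) * mmul n (mmul n (MY p ?sr) ?A) ?X a b"
    unfolding brX by (simp only: contract_add contract_scalar, (simp only: contract_dl_dl assms)?,
        (simp only: contract_row_dl contract_dl_col assms)?, (simp only: contract_row_col)?)
  have brY: "(\<lambda>i j. br m n (CY r i j) (CY s a b) p) = (\<lambda>i j. (1/2 * dl s ?pr) * (dl a j * mmul n ?Y (MY p ?pr) i b)
     + (-(1/2) * dl s ?sr) * (mmul n (MY p ?sr) ?Y a j * dl i b))"
    by (intro ext) (simp add: br_def algebra_simps)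
  have contrY: "contract n ?B (\<lambda>i j. br m n (CY r i j) (CY s a b) p) = (1/2 * dl s ?pr) * mmul n ?B (mmul n ?Y (MY p ?pr)) a b
     + (-(1/2) * dl s ?sr) * mmul n (mmul n (MY p ?sr) ?Y) ?B a b"
    unfolding brY by (simp only: contract_add contract_scalar, (simp only: contract_dl_dl assms)?,
        (simp only: contract_row_dl contract_dl_col assms)?, (simp only: contract_row_col)?)
  have cancel_pred: "mmul n ?B (mmul n ?Y (MY p ?pr)) a b = mmul n (mmul n ?X ?A) (MY p ?pr) a b"
    by (simp only: mmul_assoc[symmetric] X_gradX_mmul[OF assms(6)])
  have cancel_succ: "mmul n (mmul n (MY p ?sr) ?A) ?X a b = mmul n (mmul n (MY p ?sr) ?Y) ?B a b"
    by (simp only: mmul_assoc gradX_X)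
  show ?thesis
  proof (cases "s = r")
    case True
    have "dl r ?pr = 0" "dl r ?sr = 0"
      using predm_neq[OF assms(1,2)] sucm_neq[OF assms(1,2)] by (simp_all add: dl_neq)
    then show ?thesis
      unfolding ham_Fham_eq_contract[OF assms(1,3,4)] contrX contrY using True gradX_assemble[OF assms(4,6,7)]
      by (simp add: dl_self)
  next
    case False
    then have "dl s r = 0" by (simp add: dl_neq)
    then show ?thesis unfolding ham_Fham_eq_contract[OF assms(1,3,4)] contrX contrY using False cancel_pred cancel_succ by (simp add: algebra_simps)
  qed
qed

lemma ham_Fham_CW:
  assumes "r < m" "2 \<le> m" "0 < n" "k \<ge> 1" "s < m" "l < n"
  shows "ham m n d (Fham m n r k) (CW s a l) p = 0"
proof -
  let ?X = "MX p r" and ?Y = "MY p r" and ?A = "gradX n r k p" and ?B = "gradY n r k p"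
  let ?sr = "sucm m r"
  have brX: "(\<lambda>i j. br m n (CX r i j) (CW s a l) p) = (\<lambda>i j. (1/2 * dl s ?sr) * (dl l j * mmul n ?X (col_mat (WW p ?sr a)) i 0)
     + (-(1/2) * dl r s) * (?X l j * col_mat (WW p r a) i 0))"
    by (intro ext) (simp add: br_def col_mat_def mmul_def algebra_simps)
  have contrX: "contract n ?A (\<lambda>i j. br m n (CX r i j) (CW s a l) p) = (1/2 * dl s ?sr) * mmul n ?A (mmul n ?X (col_mat (WW p ?sr a))) l 0
     + (-(1/2) * dl r s) * mmul n (mmul n ?X ?A) (col_mat (WW p r a)) l 0"
    unfolding brX by (simp only: contract_add contract_scalar, (simp only: contract_dl_dl assms)?,
        (simp only: contract_row_dl contract_dl_col assms)?, (simp only: contract_row_col)?)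
  have brY: "(\<lambda>i j. br m n (CY r i j) (CW s a l) p) = (\<lambda>i j. (1/2 * dl r s) * (dl l j * mmul n ?Y (col_mat (WW p r a)) i 0)
     + (-(1/2) * dl s ?sr) * (?Y l j * col_mat (WW p ?sr a) i 0))"
    by (intro ext) (simp add: br_def col_mat_def mmul_def algebra_simps)
  have contrY: "contract n ?B (\<lambda>i j. br m n (CY r i j) (CW s a l) p) = (1/2 * dl r s) * mmul n ?B (mmul n ?Y (col_mat (WW p r a))) l 0
     + (-(1/2) * dl s ?sr) * mmul n (mmul n ?Y ?B) (col_mat (WW p ?sr a)) l 0"
    unfolding brY by (simp only: contract_add contract_scalar, (simp only: contract_dl_dl assms)?,
        (simp only: contract_row_dl contract_dl_col assms)?, (simp only: contract_row_col)?)
  have cancel_succ: "mmul n ?A (mmul n ?X (col_mat (WW p ?sr a))) l 0 = mmul n (mmul n ?Y ?B) (col_mat (WW p ?sr a)) l 0"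
    by (simp only: mmul_assoc[symmetric] gradX_X)
  have cancel_same: "mmul n ?B (mmul n ?Y (col_mat (WW p r a))) l 0 = mmul n (mmul n ?X ?A) (col_mat (WW p r a)) l 0"
    by (simp only: mmul_assoc[symmetric] X_gradX_mmul[OF assms(6)])
  show ?thesis unfolding ham_Fham_eq_contract[OF assms(1,3,4)] contrX contrY using cancel_succ cancel_same by (simp add: algebra_simps)
qed

lemma ham_Fham_CV:
  assumes "r < m" "2 \<le> m" "0 < n" "k \<ge> 1" "s < m" "l < n"
  shows "ham m n d (Fham m n r k) (CV s a l) p = 0"
proof -
  let ?X = "MX p r" and ?Y = "MY p r" and ?A = "gradX n r k p" and ?B = "gradY n r k p"
  let ?sr = "sucm m r"
  have brX: "(\<lambda>i j. br m n (CX r i j) (CV s a l) p) = (\<lambda>i j. (1/2 * dl r s) * (mmul n (row_mat (VV p r a)) ?X 0 j * dl i l)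
     + (-(1/2) * dl s ?sr) * (row_mat (VV p ?sr a) 0 j * ?X i l))"
    by (intro ext) (simp add: br_def row_mat_def mmul_def algebra_simps)
  have contrX: "contract n ?A (\<lambda>i j. br m n (CX r i j) (CV s a l) p) = (1/2 * dl r s) * mmul n (mmul n (row_mat (VV p r a)) ?X) ?A 0 l
     + (-(1/2) * dl s ?sr) * mmul n (mmul n (row_mat (VV p ?sr a)) ?A) ?X 0 l"
    unfolding brX by (simp only: contract_add contract_scalar, (simp only: contract_dl_dl assms)?,
        (simp only: contract_row_dl contract_dl_col assms)?, (simp only: contract_row_col)?)
  have brY: "(\<lambda>i j. br m n (CY r i j) (CV s a l) p) = (\<lambda>i j. (1/2 * dl s ?sr) * (mmul n (row_mat (VV p ?sr a)) ?Y 0 j * dl i l)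
     + (-(1/2) * dl r s) * (row_mat (VV p r a) 0 j * ?Y i l))"
    by (intro ext) (simp add: br_def row_mat_def mmul_def algebra_simps)
  have contrY: "contract n ?B (\<lambda>i j. br m n (CY r i j) (CV s a l) p) = (1/2 * dl s ?sr) * mmul n (mmul n (row_mat (VV p ?sr a)) ?Y) ?B 0 l
     + (-(1/2) * dl r s) * mmul n (mmul n (row_mat (VV p r a)) ?B) ?Y 0 l"
    unfolding brY by (simp only: contract_add contract_scalar, (simp only: contract_dl_dl assms)?,
        (simp only: contract_row_dl contract_dl_col assms)?, (simp only: contract_row_col)?)
  have cancel_same: "mmul n (mmul n (row_mat (VV p r a)) ?X) ?A 0 l = mmul n (mmul n (row_mat (VV p r a)) ?B) ?Y 0 l"
    by (simp only: mmul_assoc mmul_X_gradX[OF assms(6)])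
  have cancel_succ: "mmul n (mmul n (row_mat (VV p ?sr a)) ?A) ?X 0 l = mmul n (mmul n (row_mat (VV p ?sr a)) ?Y) ?B 0 l"
    by (simp only: mmul_assoc gradX_X)
  show ?thesis unfolding ham_Fham_eq_contract[OF assms(1,3,4)] contrX contrY using cancel_same cancel_succ by (simp add: algebra_simps)
qed

lemma ham_Fham_CX:
  assumes "r < m" "2 \<le> m" "0 < n" "k \<ge> 1" "s < m" "a < n" "b < n"
  shows "ham m n d (Fham m n r k) (CX s a b) p = (if s = r then - mmul n (mpow n (Tmat n r p) k) (MX p r) a b else 0)"
proof -
  let ?X = "MX p r" and ?Y = "MY p r" and ?A = "gradX n r k p" and ?B = "gradY n r k p"
  let ?pr = "predm m r" and ?sr = "sucm m r"
  let ?ps = "predm m s" and ?ss = "sucm m s"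
  have brX: "(\<lambda>i j. br m n (CX r i j) (CX s a b) p) = (\<lambda>i j. (1/2 * dl s ?pr) * (mmul n (MX p ?pr) ?X a j * dl i b)
     + (-(1/2) * dl s ?sr) * (dl a j * mmul n ?X (MX p ?sr) i b))"
    by (intro ext) (simp add: br_def algebra_simps)
  have contrX: "contract n ?A (\<lambda>i j. br m n (CX r i j) (CX s a b) p) = (1/2 * dl s ?pr) * mmul n (mmul n (MX p ?pr) ?X) ?A a b
     + (-(1/2) * dl s ?sr) * mmul n ?A (mmul n ?X (MX p ?sr)) a b"
    unfolding brX by (simp only: contract_add contract_scalar, (simp only: contract_dl_dl assms)?,
        (simp only: contract_row_dl contract_dl_col assms)?, (simp only: contract_row_col)?)
  have brY: "(\<lambda>i j. br m n (CY r i j) (CX s a b) p) = (\<lambda>i j. (- dl r s) * (dl i b * dl a j)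
     + (-(1/2) * dl r s) * (dl a j * mmul n (MY p s) (MX p s) i b)
     + (-(1/2) * dl r s) * (mmul n (MX p s) (MY p s) a j * dl i b)
     + (1/2 * dl r ?ps) * (MY p ?ps a j * MX p s i b)
     + (-(1/2) * dl r ?ss) * (MX p s a j * MY p ?ss i b))"
    by (intro ext) (simp add: br_def algebra_simps)
  have contrY: "contract n ?B (\<lambda>i j. br m n (CY r i j) (CX s a b) p) = (- dl r s) * ?B a b
     + (-(1/2) * dl r s) * mmul n ?B (mmul n (MY p s) (MX p s)) a b
     + (-(1/2) * dl r s) * mmul n (mmul n (MX p s) (MY p s)) ?B a b
     + (1/2 * dl r ?ps) * mmul n (mmul n (MY p ?ps) ?B) (MX p s) a b
     + (-(1/2) * dl r ?ss) * mmul n (mmul n (MX p s) ?B) (MY p ?ss) a b"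
    unfolding brY by (simp only: contract_add contract_scalar, (simp only: contract_dl_dl assms)?,
        (simp only: contract_row_dl contract_dl_col assms)?, (simp only: contract_row_col)?)
  show ?thesis
  proof (cases "s = r")
    case True
    have "dl r ?pr = 0" "dl r ?sr = 0"
      using predm_neq[OF assms(1,2)] sucm_neq[OF assms(1,2)] by (simp_all add: dl_neq)
    then show ?thesis
      unfolding ham_Fham_eq_contract[OF assms(1,3,4)] contrX contrY using True gradY_assemble[OF assms(4,6,7)]
      by (simp add: dl_self algebra_simps)
  next
    case False
    have neighbours: "dl r ?ps = dl s ?sr" "dl r ?ss = dl s ?pr"
      using predm_eq_iff[OF assms(1,5)] predm_eq_iff[OF assms(5,1)] by (auto simp: dl_def)
    have "mmul n ?A (mmul n ?X (MX p ?sr)) a b = mmul n (mmul n (MY p ?ps) ?B) (MX p s) a b" if "s = ?sr"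
      using that predm_sucm[OF assms(1)] by (simp add: mmul_assoc[symmetric] gradX_X)
    moreover have "mmul n (mmul n (MX p ?pr) ?X) ?A a b = mmul n (mmul n (MX p s) ?B) (MY p ?ss) a b"
      if "s = ?pr"
      using that sucm_predm[OF assms(1)] by (simp add: mmul_assoc mmul_X_gradX[OF assms(7)])
    ultimately show ?thesis
      unfolding ham_Fham_eq_contract[OF assms(1,3,4)] contrX contrY neighbours
      using False by (auto simp: dl_def algebra_simps)
  qed
qed



section \<open>The Hamiltonian vector field and its flow\<close>

definition Fham_field :: "nat \<Rightarrow> nat \<Rightarrow> nat \<Rightarrow> point \<Rightarrow> coord \<Rightarrow> complex" where
  "Fham_field n r k p c = (case c of
      CX s i j \<Rightarrow> if s = r then - mmul n (mpow n (Tmat n r p) k) (MX p r) i j else 0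
    | CY s i j \<Rightarrow> if s = r then mmul n (MY p r) (mpow n (Tmat n r p) k) i j else 0
    | _ \<Rightarrow> 0)"

lemma ham_Fham_eq_field:
  assumes "r < m" "2 \<le> m" "0 < n" "k \<ge> 1" "c \<in> coords m n d"
  shows "ham m n d (Fham m n r k) c p = Fham_field n r k p c"
  using assms(5) unfolding coords_def
  by (auto simp: Fham_field_def ham_Fham_CX[OF assms(1-4)] ham_Fham_CY[OF assms(1-4)] ham_Fham_CV[OF assms(1-4)]
      ham_Fham_CW[OF assms(1-4)])

lemma coords_CX: "s < m \<Longrightarrow> i < n \<Longrightarrow> j < n \<Longrightarrow> CX s i j \<in> coords m n d"
  by (auto simp: coords_def)

lemma coords_CY: "s < m \<Longrightarrow> i < n \<Longrightarrow> j < n \<Longrightarrow> CY s i j \<in> coords m n d"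
  by (auto simp: coords_def)


lemma ham_flow_curve_Fham_deriv:
  assumes "r < m" "2 \<le> m" "0 < n" "k \<ge> 1"
    and "ham_flow_curve m n d (Fham m n r k) I \<gamma>" "c \<in> coords m n d" "t \<in> I"
  shows "((\<lambda>s. \<gamma> s c) has_vector_derivative Fham_field n r k (\<gamma> t) c) (at t within I)"
  using assms(5-7) ham_Fham_eq_field[OF assms(1-4,6)] unfolding ham_flow_curve_def by metis

text \<open>\<open>T_r\<close> is conserved: \<open>(X_r Y_r)' = - T_r^k X_r Y_r + X_r Y_r T_r^k = 0\<close>.\<close>

lemma Tmat_flow_const:
  assumes basic: "r < m" "2 \<le> m" "0 < n" "k \<ge> 1"
    and I: "convex I" "0 \<in> I" "t \<in> I"
    and flow: "ham_flow_curve m n d (Fham m n r k) I \<gamma>"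
  shows "meq n (Tmat n r (\<gamma> t)) (Tmat n r (\<gamma> 0))"
  unfolding meq_def
proof (intro allI impI)
  fix a b assume ab: "a < n" "b < n"
  have "((\<lambda>u. Tmat n r (\<gamma> u) a b) has_vector_derivative 0) (at s within I)" if s: "s \<in> I" for s
  proof -
    let ?Tk = "mpow n (Tmat n r (\<gamma> s)) k" and ?X = "MX (\<gamma> s) r" and ?Y = "MY (\<gamma> s) r"
    have "((\<lambda>u. MX (\<gamma> u) r a l) has_vector_derivative - mmul n ?Tk ?X a l) (at s within I)" if "l < n" for l
      using ham_flow_curve_Fham_deriv[OF basic flow coords_CX[OF basic(1) ab(1) that] s]
      by (simp add: Fham_field_def MX_def)
    moreover have "((\<lambda>u. MY (\<gamma> u) r l b) has_vector_derivative mmul n ?Y ?Tk l b) (at s within I)" if "l < n" for l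
      using ham_flow_curve_Fham_deriv[OF basic flow coords_CY[OF basic(1) that ab(2)] s]
      by (simp add: Fham_field_def MY_def)
    ultimately have "((\<lambda>u. mmul n (MX (\<gamma> u) r) (MY (\<gamma> u) r) a b) has_vector_derivative
        (\<Sum>l<n. - mmul n ?Tk ?X a l * ?Y l b) + (\<Sum>l<n. ?X a l * mmul n ?Y ?Tk l b)) (at s within I)"
      by (intro has_vector_derivative_mmul)
    moreover have "(\<Sum>l<n. - mmul n ?Tk ?X a l * ?Y l b) + (\<Sum>l<n. ?X a l * mmul n ?Y ?Tk l b)
        = - mmul n ?Tk (mmul n ?X ?Y) a b + mmul n (mmul n ?X ?Y) ?Tk a b"
      by (simp add: sum_negf mmul_assoc flip: mmul_def)
    moreover have "mmul n ?Tk (mmul n ?X ?Y) a b = mmul n (mmul n ?X ?Y) ?Tk a b"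
      using mcomm_mpow_Tmat ab by (auto simp: mcomm_def meq_def)
    ultimately have "((\<lambda>u. mmul n (MX (\<gamma> u) r) (MY (\<gamma> u) r) a b) has_vector_derivative 0) (at s within I)"
      by simp
    then show ?thesis
      unfolding Tmat_def by (rule has_vector_derivative_add[OF has_vector_derivative_const, simplified])
  qed
  then show "Tmat n r (\<gamma> t) a b = Tmat n r (\<gamma> 0) a b"
    using has_vector_derivative_zero_eq[OF I(1) _ I(3,2)] by blast
qed


definition Fham_flow :: "nat \<Rightarrow> nat \<Rightarrow> nat \<Rightarrow> point \<Rightarrow> real \<Rightarrow> point" where
  "Fham_flow n r k p0 t c = (case c of
      CX s i j \<Rightarrow> if s = r then mmul n (mexpt n (\<lambda>a b. - mpow n (Tmat n r p0) k a b) t) (MX p0 r) i j else p0 c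
    | CY s i j \<Rightarrow> if s = r then mmul n (MY p0 r) (mexpt n (mpow n (Tmat n r p0) k) t) i j else p0 c
    | _ \<Rightarrow> p0 c)"

lemma flow_coord_const:
  assumes "convex I" "0 \<in> I" "t \<in> I"
    and "\<And>s. s \<in> I \<Longrightarrow> ((\<lambda>u. \<gamma> u c) has_vector_derivative Fham_field n r k (\<gamma> s) c) (at s within I)"
    and "\<And>q. Fham_field n r k q c = 0"
  shows "\<gamma> t c = \<gamma> 0 c"
  using has_vector_derivative_zero_eq[OF assms(1) _ assms(3,2)] assms(4,5) by metis

lemma Fham_flow_unique:
  assumes basic: "r < m" "2 \<le> m" "0 < n" "k \<ge> 1"
    and I: "convex I" "0 \<in> I" "t \<in> I"
    and flow: "ham_flow_curve m n d (Fham m n r k) I \<gamma>"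
    and init: "\<forall>c\<in>coords m n d. \<gamma> 0 c = p0 c"
    and c: "c \<in> coords m n d"
  shows "\<gamma> t c = Fham_flow n r k p0 t c"
proof -
  let ?B = "mpow n (Tmat n r p0) k"
  have deriv: "((\<lambda>u. \<gamma> u c') has_vector_derivative Fham_field n r k (\<gamma> s) c') (at s within I)"
    if "c' \<in> coords m n d" "s \<in> I" for c' s
    by (rule ham_flow_curve_Fham_deriv[OF basic flow that])
  have "meq n (Tmat n r (\<gamma> 0)) (Tmat n r p0)"
    using init basic(1) by (auto simp: meq_def Tmat_def mmul_def MX_def MY_def coords_def)
  then have Tk: "meq n (mpow n (Tmat n r (\<gamma> s)) k) ?B" if "s \<in> I" for s
    using Tmat_flow_const[OF basic I(1,2) that flow] by (intro mpow_meq) (auto simp: meq_def)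
  from c consider
      (X) i j where "c = CX r i j" "i < n" "j < n"
    | (Y) i j where "c = CY r i j" "i < n" "j < n"
    | (other) "\<forall>i j. c \<noteq> CX r i j" "\<forall>i j. c \<noteq> CY r i j"
    unfolding coords_def by blast
  then show ?thesis
  proof cases
    case X
    have "((\<lambda>u. MX (\<gamma> u) r i j) has_vector_derivative mmul n (\<lambda>a b. - ?B a b) (MX (\<gamma> s) r) i j) (at s within I)"
      if "s \<in> I" "i < n" "j < n" for s i j
      using deriv[OF coords_CX[OF basic(1) that(2,3)] that(1)] mmul_meq[OF Tk[OF that(1)] meq_refl that(2,3)]
      by (simp add: Fham_field_def MX_def mmul_uminus_left)
    then have "MX (\<gamma> t) r i j = mmul n (mexpt n (\<lambda>a b. - ?B a b) t) (MX (\<gamma> 0) r) i j"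
      by (rule left_linear_ode_unique[OF I]) (use X in auto)
    also have "\<dots> = mmul n (mexpt n (\<lambda>a b. - ?B a b) t) (MX p0 r) i j"
      by (rule mmul_cong_right) (use init basic(1) X in \<open>simp add: MX_def coords_CX\<close>)
    finally show ?thesis
      using X by (simp add: MX_def Fham_flow_def)
  next
    case Y
    have "((\<lambda>u. MY (\<gamma> u) r i j) has_vector_derivative mmul n (MY (\<gamma> s) r) ?B i j) (at s within I)"
      if "s \<in> I" "i < n" "j < n" for s i j
      using deriv[OF coords_CY[OF basic(1) that(2,3)] that(1)] mmul_meq[OF meq_refl Tk[OF that(1)] that(2,3)]
      by (simp add: Fham_field_def MY_def)
    then have "MY (\<gamma> t) r i j = mmul n (MY (\<gamma> 0) r) (mexpt n ?B t) i j"
      by (rule right_linear_ode_unique[OF I]) (use Y in auto)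
    also have "\<dots> = mmul n (MY p0 r) (mexpt n ?B t) i j"
      by (rule mmul_cong_left) (use init basic(1) Y in \<open>simp add: MY_def coords_CY\<close>)
    finally show ?thesis
      using Y by (simp add: MY_def Fham_flow_def)
  next
    case other
    then have "Fham_field n r k q c = 0" "Fham_flow n r k p0 t c = p0 c" for q
      by (cases c; simp add: Fham_field_def Fham_flow_def)+
    then show ?thesis
      using flow_coord_const[OF I deriv[OF c]] init c by simp
  qed
qed


lemma MX_Fham_flow: "MX (Fham_flow n r k p0 t) r = mmul n (mexpt n (\<lambda>a b. - mpow n (Tmat n r p0) k a b) t) (MX p0 r)"
  by (intro ext) (simp add: MX_def Fham_flow_def)

lemma MY_Fham_flow: "MY (Fham_flow n r k p0 t) r = mmul n (MY p0 r) (mexpt n (mpow n (Tmat n r p0) k) t)"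
  by (intro ext) (simp add: MY_def Fham_flow_def)

lemma Fham_flow_zero: "c \<in> coords m n d \<Longrightarrow> Fham_flow n r k p0 0 c = p0 c"
  unfolding coords_def
  by (auto simp: Fham_flow_def mexp_zero mmul_mid_left mmul_mid_right MX_def MY_def)

lemma Tmat_Fham_flow: "meq n (Tmat n r (Fham_flow n r k p0 t)) (Tmat n r p0)"
  unfolding meq_def
proof (intro allI impI)
  fix i j assume ij: "i < n" "j < n"
  let ?B = "mpow n (Tmat n r p0) k" and ?X = "MX p0 r" and ?Y = "MY p0 r"
  let ?F = "mexpt n (\<lambda>a b. - ?B a b) t" and ?G = "mexpt n ?B t"
  have "mmul n (mmul n ?F ?X) (mmul n ?Y ?G) i j = mmul n (mmul n ?F (mmul n ?X ?Y)) ?G i j"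
    by (simp only: mmul_assoc)
  also have "\<dots> = mmul n (mmul n (mmul n ?X ?Y) ?F) ?G i j"
    by (rule mmul_cong_left) (intro mexp_mcomm mcomm_uminus mcomm_mpow_Tmat ij, simp)
  also have "\<dots> = mmul n (mmul n ?X ?Y) (mmul n ?F ?G) i j"
    by (simp only: mmul_assoc)
  also have "\<dots> = mmul n (mmul n ?X ?Y) mid i j"
    by (rule mmul_cong_right) (rule mexpt_uminus_inverse, use ij in auto)
  also have "\<dots> = mmul n ?X ?Y i j"
    using ij by (simp add: mmul_mid_right)
  finally show "Tmat n r (Fham_flow n r k p0 t) i j = Tmat n r p0 i j"
    by (simp add: Tmat_def MX_Fham_flow MY_Fham_flow)
qed

lemma ham_flow_curve_Fham_flow:
  assumes basic: "r < m" "2 \<le> m" "0 < n" "k \<ge> 1"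
  shows "ham_flow_curve m n d (Fham m n r k) UNIV (Fham_flow n r k p0)"
  unfolding ham_flow_curve_def
proof (intro ballI)
  fix c t assume c: "c \<in> coords m n d"
  let ?B = "mpow n (Tmat n r p0) k" and ?p = "Fham_flow n r k p0 t"
  have Tk: "meq n (mpow n (Tmat n r ?p) k) ?B"
    by (rule mpow_meq[OF Tmat_Fham_flow])
  from c consider
      (X) i j where "c = CX r i j" "i < n" "j < n"
    | (Y) i j where "c = CY r i j" "i < n" "j < n"
    | (other) "\<forall>i j. c \<noteq> CX r i j" "\<forall>i j. c \<noteq> CY r i j"
    unfolding coords_def by blast
  then have "((\<lambda>s. Fham_flow n r k p0 s c) has_vector_derivative Fham_field n r k ?p c) (at t)"
  proof cases
    case X
    have "Fham_field n r k ?p c = mmul n (\<lambda>a b. - ?B a b) (mmul n (mexpt n (\<lambda>a b. - ?B a b) t) (MX p0 r)) i j"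
      using X mmul_meq[OF Tk meq_refl X(2,3)] by (simp add: Fham_field_def MX_Fham_flow mmul_uminus_left)
    moreover have "(\<lambda>s. Fham_flow n r k p0 s c) = (\<lambda>s. mmul n (mexpt n (\<lambda>a b. - ?B a b) s) (MX p0 r) i j)"
      using X by (simp add: Fham_flow_def)
    ultimately show ?thesis
      by (simp only:) (rule has_vector_derivative_mexpt_mmul[OF X(2)])
  next
    case Y
    have "Fham_field n r k ?p c = mmul n (mmul n (MY p0 r) (mexpt n ?B t)) ?B i j"
      using Y mmul_meq[OF meq_refl Tk Y(2,3)] by (simp add: Fham_field_def MY_Fham_flow)
    moreover have "(\<lambda>s. Fham_flow n r k p0 s c) = (\<lambda>s. mmul n (MY p0 r) (mexpt n ?B s) i j)"
      using Y by (simp add: Fham_flow_def)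
    ultimately show ?thesis
      by (simp only:) (rule has_vector_derivative_mmul_mexpt[OF Y(3)])
  next
    case other
    then have "Fham_field n r k ?p c = 0" "(\<lambda>s. Fham_flow n r k p0 s c) = (\<lambda>s. p0 c)"
      by (cases c; auto simp: Fham_field_def Fham_flow_def)+
    then show ?thesis
      by simp
  qed
  then show "((\<lambda>s. Fham_flow n r k p0 s c) has_vector_derivative ham m n d (Fham m n r k) c ?p) (at t within UNIV)"
    by (simp add: ham_Fham_eq_field[OF basic c])
qed


lemma mexp_Tbig:
  assumes "r < m" "0 < n" "k \<ge> 1"
  shows "mexp (n*m) (\<lambda>i j. c * mpow (n*m) (Tbig n p r) k i j)
       = blk_id n r (mexp n (\<lambda>i j. c * mpow n (Tmat n r p) k i j))"
  by (simp add: Tbig_eq_blk mpow_blk[OF assms] scalar_blk mexp_blk[OF assms(1,2)])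

lemma blk_id_mmul_Xbig:
  assumes "r < m" "0 < n" "a < n*m"
  shows "mmul (n*m) (blk_id n r G) (Xbig m n p) a b
       = (if a div n = r then (if b div n = (r + 1) mod m then mmul n G (MX p r) (a mod n) (b mod n) else 0)
          else Xbig m n p a b)"
proof (cases "a div n = r")
  case True
  have "mmul (n*m) (blk_id n r G) (Xbig m n p) a b = mmul (n*m) (blk n r G) (Xbig m n p) a b"
    by (rule mmul_cong_left) (use True in \<open>auto simp: blk_id_def blk_def mid_def\<close>)
  also have "\<dots> = (\<Sum>l<n. G (a mod n) l * Xbig m n p (r*n + l) b)"
    using True by (simp add: mmul_blk_left[OF assms(1,2)])
  also have "\<dots> = (if b div n = (r + 1) mod m then mmul n G (MX p r) (a mod n) (b mod n) else 0)"
    by (auto simp: Xbig_def mmul_def MX_def intro!: sum.cong)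
  finally show ?thesis
    using True by simp
next
  case False
  have "mmul (n*m) (blk_id n r G) (Xbig m n p) a b = mmul (n*m) mid (Xbig m n p) a b"
    by (rule mmul_cong_left) (use False in \<open>simp add: blk_id_def\<close>)
  then show ?thesis
    using False assms(3) by (simp add: mmul_mid_left)
qed

lemma Ybig_mmul_blk_id:
  assumes "r < m" "0 < n" "b < n*m"
  shows "mmul (n*m) (Ybig m n p) (blk_id n r G) a b
       = (if b div n = r then (if a div n = (r + 1) mod m then mmul n (MY p r) G (a mod n) (b mod n) else 0)
          else Ybig m n p a b)"
proof (cases "b div n = r")
  case True
  have "mmul (n*m) (Ybig m n p) (blk_id n r G) a b = mmul (n*m) (Ybig m n p) (blk n r G) a b"
    by (rule mmul_cong_right) (use True in \<open>auto simp: blk_id_def blk_def mid_def\<close>)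
  also have "\<dots> = (\<Sum>l<n. Ybig m n p a (r*n + l) * G l (b mod n))"
    using True by (simp add: mmul_blk_right[OF assms(1,2)])
  also have "\<dots> = (if a div n = (r + 1) mod m then mmul n (MY p r) G (a mod n) (b mod n) else 0)"
    by (auto simp: Ybig_def mmul_def MY_def intro!: sum.cong)
  finally show ?thesis
    using True by simp
next
  case False
  have "mmul (n*m) (Ybig m n p) (blk_id n r G) a b = mmul (n*m) (Ybig m n p) mid a b"
    by (rule mmul_cong_right) (use False in \<open>simp add: blk_id_def\<close>)
  then show ?thesis
    using False assms(3) by (simp add: mmul_mid_right)
qed

lemma Xbig_Fham_flow:
  assumes "r < m" "0 < n" "k \<ge> 1" "a < n*m"
  shows "Xbig m n (Fham_flow n r k p0 t) a b
       = mmul (n*m) (mexp (n*m) (\<lambda>i j. - complex_of_real t * mpow (n*m) (Tbig n p0 r) k i j)) (Xbig m n p0) a b"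
proof -
  have "(\<lambda>i j. - complex_of_real t * mpow n (Tmat n r p0) k i j)
      = (\<lambda>i j. complex_of_real t * - mpow n (Tmat n r p0) k i j)"
    by simp
  then show ?thesis
    unfolding mexp_Tbig[OF assms(1-3)] blk_id_mmul_Xbig[OF assms(1,2,4)]
    by (simp add: Xbig_def Fham_flow_def MX_def)
qed

lemma Ybig_Fham_flow:
  assumes "r < m" "0 < n" "k \<ge> 1" "b < n*m"
  shows "Ybig m n (Fham_flow n r k p0 t) a b
       = mmul (n*m) (Ybig m n p0) (mexp (n*m) (\<lambda>i j. complex_of_real t * mpow (n*m) (Tbig n p0 r) k i j)) a b"
  unfolding mexp_Tbig[OF assms(1-3)] Ybig_mmul_blk_id[OF assms(1,2,4)]
  by (simp add: Ybig_def Fham_flow_def MY_def)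

lemma div_less_of_less_mult: "(a::nat) < n * m \<Longrightarrow> a div n < m"
  by (simp add: less_mult_imp_div_less mult.commute)

lemma Xbig_cong_coords:
  assumes "\<forall>c\<in>coords m n d. p c = q c" "a < n*m" "b < n*m"
  shows "Xbig m n p a b = Xbig m n q a b"
proof -
  have "0 < n" using assms(2) by (cases n) auto
  then show ?thesis
    using assms div_less_of_less_mult[OF assms(2)] by (simp add: Xbig_def coords_CX)
qed

lemma Ybig_cong_coords:
  assumes "\<forall>c\<in>coords m n d. p c = q c" "a < n*m" "b < n*m"
  shows "Ybig m n p a b = Ybig m n q a b"
proof -
  have "0 < n" using assms(2) by (cases n) auto
  then show ?thesis
    using assms div_less_of_less_mult[OF assms(3)] by (simp add: Ybig_def coords_CY)
qed


theorem proposition3p6: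
  fixes m n k r :: nat and d :: "nat \<Rightarrow> nat" and p0 :: point
  assumes "m \<ge> 2" and "n \<ge> 1" and "d 0 \<ge> 1"
    and "r < m" and "k \<ge> 1"
    and "Mbullet m n d p0"
  shows "(\<exists>\<gamma>. ham_flow_curve m n d (Fham m n r k) UNIV \<gamma>
              \<and> (\<forall>c\<in>coords m n d. \<gamma> 0 c = p0 c))
       \<and> (\<forall>I \<gamma>. open I \<and> is_interval I \<and> 0 \<in> I
              \<and> ham_flow_curve m n d (Fham m n r k) I \<gamma>
              \<and> (\<forall>c\<in>coords m n d. \<gamma> 0 c = p0 c)
           \<longrightarrow> (\<forall>t\<in>I.
                 (\<forall>a<n*m. \<forall>b<n*m.
                    Xbig m n (\<gamma> t) a b
                      = mmul (n*m) (mexp (n*m) (\<lambda>i j. - complex_of_real t * mpow (n*m) (Tbig n p0 r) k i j))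
                                   (Xbig m n p0) a b
                  \<and> Ybig m n (\<gamma> t) a b
                      = mmul (n*m) (Ybig m n p0)
                                   (mexp (n*m) (\<lambda>i j. complex_of_real t * mpow (n*m) (Tbig n p0 r) k i j)) a b)
               \<and> (\<forall>s<m. \<forall>\<alpha>. 1 \<le> \<alpha> \<and> \<alpha> \<le> d s \<longrightarrow>
                    (\<forall>j<n. \<gamma> t (CV s \<alpha> j) = p0 (CV s \<alpha> j) \<and> \<gamma> t (CW s \<alpha> j) = p0 (CW s \<alpha> j)))))"
proof -
  have basic: "r < m" "2 \<le> m" "0 < n" "k \<ge> 1"
    using assms by auto
  have flow_eq: "\<forall>c\<in>coords m n d. \<gamma> t c = Fham_flow n r k p0 t c"
    if "open I \<and> is_interval I \<and> 0 \<in> I \<and> ham_flow_curve m n d (Fham m n r k) I \<gamma>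
      \<and> (\<forall>c\<in>coords m n d. \<gamma> 0 c = p0 c)" "t \<in> I" for I \<gamma> t
    using Fham_flow_unique[OF basic is_interval_convex] that by blast
  show ?thesis
  proof (intro conjI allI impI ballI)
    show "\<exists>\<gamma>. ham_flow_curve m n d (Fham m n r k) UNIV \<gamma> \<and> (\<forall>c\<in>coords m n d. \<gamma> 0 c = p0 c)"
      using ham_flow_curve_Fham_flow[OF basic] Fham_flow_zero by blast
  next
    fix I \<gamma> t a b
    assume flow: "open I \<and> is_interval I \<and> 0 \<in> I \<and> ham_flow_curve m n d (Fham m n r k) I \<gamma>
      \<and> (\<forall>c\<in>coords m n d. \<gamma> 0 c = p0 c)" and "t \<in> I" "a < n*m" "b < n*m"
    note eq = flow_eq[OF flow \<open>t \<in> I\<close>]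
    show "Xbig m n (\<gamma> t) a b = mmul (n*m) (mexp (n*m) (\<lambda>i j. - complex_of_real t * mpow (n*m) (Tbig n p0 r) k i j))
        (Xbig m n p0) a b"
      using Xbig_cong_coords[OF eq \<open>a < n*m\<close> \<open>b < n*m\<close>] Xbig_Fham_flow[OF basic(1,3,4) \<open>a < n*m\<close>] by simp
    show "Ybig m n (\<gamma> t) a b = mmul (n*m) (Ybig m n p0)
        (mexp (n*m) (\<lambda>i j. complex_of_real t * mpow (n*m) (Tbig n p0 r) k i j)) a b"
      using Ybig_cong_coords[OF eq \<open>a < n*m\<close> \<open>b < n*m\<close>] Ybig_Fham_flow[OF basic(1,3,4) \<open>b < n*m\<close>] by simp
  next
    fix I \<gamma> t s \<alpha> j
    assume flow: "open I \<and> is_interval I \<and> 0 \<in> I \<and> ham_flow_curve m n d (Fham m n r k) I \<gamma>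
      \<and> (\<forall>c\<in>coords m n d. \<gamma> 0 c = p0 c)" and "t \<in> I" "s < m" "1 \<le> \<alpha> \<and> \<alpha> \<le> d s" "j < n"
    then show "\<gamma> t (CV s \<alpha> j) = p0 (CV s \<alpha> j)" "\<gamma> t (CW s \<alpha> j) = p0 (CW s \<alpha> j)"
      using flow_eq[OF flow \<open>t \<in> I\<close>] by (auto simp: Fham_flow_def coords_def)
  qed
qed

end
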